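(* Assume $h\in\mathcal H$, where $\mathcal H=\{h: h>S/\ln(1+S/\lambda_0)-S-\lambda_0\}$. (iii) $J_{\rm K\text{-}L}$ attains its unique minimum over $\Theta$ at a point $\hat\vartheta$, which is the unique solution of $J'_{\rm K\text{-}L}(\hat\vartheta)=0$. Its location depends on the sign of $h$: - if $h>0$, then $\hat\vartheta\in(\vartheta_0-\delta,\vartheta_0)$; - if $h<0$, then $\hat\vartheta\in(\vartheta_0,\vartheta_0+\delta)$; - if $h=0$, then $\hat\vartheta=\vartheta_0$. (iv) If in addition $h\neq0$, there exist constants $m,M>0$ such that for all $\vartheta\in\Theta$ $$m|\vartheta-\hat\vartheta|\le|J'_{\rm K\text{-}L}(\vartheta)|\le M|\vartheta-\hat\vartheta|$$ and $$\frac m2(\vartheta-\hat\vartheta)^2\le J_{\rm K\text{-}L}(\vartheta)-J_{\rm K\text{-}L}(\hat\vartheta)\le\frac M2(\vartheta-\hat\vartheta)^2.$$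
   Context: Fix constants $S>0$, $\lambda_0>0$, $\kappa\in(0,1/2)$, $\delta>0$, $\tau>0$, and reals $\alpha<\beta$ such that $(\alpha-\delta,\beta+\delta)\subset(0,\tau-\delta)$. Put $\Theta_0=(\alpha,\beta)$ and $\Theta=(\alpha-\delta,\beta+\delta)$. Let $$\psi(x)=(x/\delta)^\kappa\mathbf 1_{\{0<x<\delta\}}+\mathbf 1_{\{x\ge\delta\}}.$$ The theoretical intensity is $\lambda(\vartheta,t)=S\psi(t-\vartheta)+\lambda_0$ for $t\in[0,\tau]$, $\vartheta\in\Theta$. The true intensity is $\lambda_*(\vartheta_0,t)=(S+h)\psi(t-\vartheta_0)+\lambda_0$, with fixed $\vartheta_0\in\Theta_0$ and fixed $h\in\mathbb R$. The Kullback–Leibler divergence is $$J_{\rm K\text{-}L}(\vartheta)=\int_{\vartheta\wedge\vartheta_0}^\tau\Bigl[\frac{\lambda(\vartheta,t)}{\lambda_*(\vartheta_0,t)}-1-\ln\frac{\lambda(\vartheta,t)}{\lambda_*(\vartheta_0,t)}\Bigr]\lambda_*(\vartheta_0,t)\,dt,\qquad\vartheta\in\Theta.$$ *)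

theory Defs
  imports "HOL-Analysis.Analysis"
begin

definition psi :: "real \<Rightarrow> real \<Rightarrow> real \<Rightarrow> real" where
  "psi \<kappa> \<delta> x = (if 0 < x \<and> x < \<delta> then (x / \<delta>) powr \<kappa> else if x \<ge> \<delta> then 1 else 0)"

definition lam :: "real \<Rightarrow> real \<Rightarrow> real \<Rightarrow> real \<Rightarrow> real \<Rightarrow> real \<Rightarrow> real" where
  "lam S lam0 \<kappa> \<delta> th t = S * psi \<kappa> \<delta> (t - th) + lam0"

definition lam_star :: "real \<Rightarrow> real \<Rightarrow> real \<Rightarrow> real \<Rightarrow> real \<Rightarrow> real \<Rightarrow> real \<Rightarrow> real" where
  "lam_star S h lam0 \<kappa> \<delta> th0 t = (S + h) * psi \<kappa> \<delta> (t - th0) + lam0"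

definition JKL :: "real \<Rightarrow> real \<Rightarrow> real \<Rightarrow> real \<Rightarrow> real \<Rightarrow> real \<Rightarrow> real \<Rightarrow> real \<Rightarrow> real" where
  "JKL S lam0 \<kappa> \<delta> \<tau> th0 h th =
     integral {min th th0..\<tau>}
       (\<lambda>t. (lam S lam0 \<kappa> \<delta> th t / lam_star S h lam0 \<kappa> \<delta> th0 t - 1
              - ln (lam S lam0 \<kappa> \<delta> th t / lam_star S h lam0 \<kappa> \<delta> th0 t))
             * lam_star S h lam0 \<kappa> \<delta> th0 t)"

end

theory Submission
  imports Defs
begin

text \<open>Substituting \<open>w = psi (t - th)\<close> (a layer-cake argument) makes \<open>JKL\<close> differentiable in
  \<open>th\<close>, with derivative \<open>J' th = (S + h) F (th - th0) - (S - lam0 L)\<close>, \<open>L = ln (1 + S / lam0)\<close>,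
  where \<open>F c = \<integral>\<^sub>0\<^sup>1 psi (c + psi_inv w) S / (S w + lam0) dw\<close> is nondecreasing, vanishes
  for \<open>c \<le> -\<delta>\<close>, equals \<open>L\<close> for \<open>c \<ge> \<delta>\<close> and increases strictly in between. The hypothesis on
  \<open>h\<close> makes \<open>J'\<close> negative left of \<open>th0 - \<delta>\<close> and positive right of \<open>th0 + \<delta>\<close>, so \<open>J'\<close> has a
  unique zero, the strict minimiser; its side of \<open>th0\<close> is the sign of
  \<open>J' th0 = h (S - lam0 L) / S\<close>. For \<open>h \<noteq> 0\<close> the zero avoids \<open>th0\<close>, where \<open>psi\<close> has infinite
  slope, so \<open>F\<close> is bi-Lipschitz near it; with monotonicity and boundedness of \<open>J'\<close> this gives
  the linear bounds on \<open>J'\<close>, and integrating them the quadratic bounds on \<open>JKL\<close>.\<close>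

lemma psi_eq_powr_clamp:
  assumes "\<delta> > 0"
  shows "psi \<kappa> \<delta> x = (min (max x 0) \<delta> / \<delta>) powr \<kappa>"
  using assms by (auto simp: psi_def min_def max_def)

lemma continuous_on_psi:
  assumes "\<delta> > 0" "\<kappa> > 0"
  shows "continuous_on A (psi \<kappa> \<delta>)"
proof -
  have "continuous_on A (\<lambda>x. (min (max x 0) \<delta> / \<delta>) powr \<kappa>)"
    using assms by (intro continuous_on_powr' continuous_intros) (auto simp: min_def max_def)
  then show ?thesis using psi_eq_powr_clamp[OF assms(1)] by simp
qed

lemma continuous_on_psi_comp [continuous_intros]:
  "\<delta> > 0 \<Longrightarrow> \<kappa> > 0 \<Longrightarrow> continuous_on A f \<Longrightarrow> continuous_on A (\<lambda>x. psi \<kappa> \<delta> (f x))"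
  using continuous_on_compose2[OF continuous_on_psi] by blast

lemma psi_nonneg: "0 \<le> psi \<kappa> \<delta> x"
  by (auto simp: psi_def)

lemma psi_le_1: "\<delta> > 0 \<Longrightarrow> \<kappa> > 0 \<Longrightarrow> psi \<kappa> \<delta> x \<le> 1"
  by (auto simp: psi_def intro!: powr_le1)

lemma psi_eq_0: "x \<le> 0 \<Longrightarrow> \<delta> > 0 \<Longrightarrow> psi \<kappa> \<delta> x = 0"
  by (auto simp: psi_def)

lemma psi_eq_1: "x \<ge> \<delta> \<Longrightarrow> psi \<kappa> \<delta> x = 1"
  by (auto simp: psi_def)

lemma psi_mono:
  assumes "\<delta> > 0" "\<kappa> > 0" "x \<le> y"
  shows "psi \<kappa> \<delta> x \<le> psi \<kappa> \<delta> y"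
  unfolding psi_eq_powr_clamp[OF assms(1)]
  using assms by (intro powr_mono2 divide_right_mono) (auto simp: min_def max_def)

lemma psi_strict_mono:
  assumes "\<delta> > 0" "\<kappa> > 0" "x < y" "0 < y" "x < \<delta>"
  shows "psi \<kappa> \<delta> x < psi \<kappa> \<delta> y"
  unfolding psi_eq_powr_clamp[OF assms(1)]
  using assms by (intro powr_less_mono2 divide_strict_right_mono) (auto simp: min_def max_def)

lemma psi_pos_less_1:
  assumes "\<delta> > 0" "\<kappa> > 0" "0 < x" "x < \<delta>"
  shows "0 < psi \<kappa> \<delta> x" "psi \<kappa> \<delta> x < 1"
  using psi_strict_mono[OF assms(1,2), of 0 x] psi_strict_mono[OF assms(1,2), of x \<delta>] assms
  by (simp_all add: psi_eq_0 psi_eq_1)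

definition psi_inv :: "real \<Rightarrow> real \<Rightarrow> real \<Rightarrow> real" where
  "psi_inv \<kappa> \<delta> w = \<delta> * w powr (1/\<kappa>)"

lemma psi_inv_0 [simp]: "psi_inv \<kappa> \<delta> 0 = 0"
  and psi_inv_1 [simp]: "psi_inv \<kappa> \<delta> 1 = \<delta>"
  by (auto simp: psi_inv_def)

lemma psi_inv_psi:
  assumes "\<delta> > 0" "\<kappa> > 0" "0 \<le> y" "y \<le> \<delta>"
  shows "psi_inv \<kappa> \<delta> (psi \<kappa> \<delta> y) = y"
proof -
  have "psi \<kappa> \<delta> y = (y/\<delta>) powr \<kappa>"
    using assms by (simp add: psi_eq_powr_clamp min_def max_def)
  then show ?thesis using assms by (simp add: psi_inv_def powr_powr)
qed

lemma psi_inv_mono: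
  "\<delta> > 0 \<Longrightarrow> \<kappa> > 0 \<Longrightarrow> 0 \<le> w \<Longrightarrow> w \<le> v \<Longrightarrow> psi_inv \<kappa> \<delta> w \<le> psi_inv \<kappa> \<delta> v"
  unfolding psi_inv_def by (auto intro!: powr_mono2)

lemma psi_inv_nonneg: "\<delta> > 0 \<Longrightarrow> 0 \<le> psi_inv \<kappa> \<delta> w"
  by (simp add: psi_inv_def)

lemma psi_inv_pos: "\<delta> > 0 \<Longrightarrow> w > 0 \<Longrightarrow> psi_inv \<kappa> \<delta> w > 0"
  by (simp add: psi_inv_def)

lemma psi_inv_le:
  "\<delta> > 0 \<Longrightarrow> \<kappa> > 0 \<Longrightarrow> 0 \<le> w \<Longrightarrow> w \<le> 1 \<Longrightarrow> psi_inv \<kappa> \<delta> w \<le> \<delta>"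
  unfolding psi_inv_def by (auto intro!: powr_le1)

lemma psi_psi_inv:
  assumes "\<delta> > 0" "\<kappa> > 0" "0 \<le> w" "w \<le> 1"
  shows "psi \<kappa> \<delta> (psi_inv \<kappa> \<delta> w) = w"
proof -
  have "min (max (psi_inv \<kappa> \<delta> w) 0) \<delta> / \<delta> = w powr (1/\<kappa>)"
    using assms psi_inv_nonneg[of \<delta> \<kappa> w] psi_inv_le[OF assms] by (simp add: psi_inv_def)
  then show ?thesis using assms by (simp add: psi_eq_powr_clamp powr_powr)
qed

lemma le_psi_inv_of_psi_le:
  assumes "\<delta> > 0" "\<kappa> > 0" "x \<le> \<delta>" "psi \<kappa> \<delta> x \<le> w"
  shows "x \<le> psi_inv \<kappa> \<delta> w"
proof (cases "x \<le> 0")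
  case False
  then have "psi_inv \<kappa> \<delta> (psi \<kappa> \<delta> x) = x" using assms by (intro psi_inv_psi) auto
  then show ?thesis using assms psi_nonneg psi_inv_mono[OF assms(1,2), of "psi \<kappa> \<delta> x" w] by auto
qed (use psi_inv_nonneg[OF assms(1)] in \<open>simp add: order_trans\<close>)

lemma psi_inv_le_of_le_psi:
  assumes "\<delta> > 0" "\<kappa> > 0" "0 \<le> y" "0 \<le> w" "w \<le> psi \<kappa> \<delta> y"
  shows "psi_inv \<kappa> \<delta> w \<le> y"
proof (cases "y \<le> \<delta>")
  case True
  then have "psi_inv \<kappa> \<delta> (psi \<kappa> \<delta> y) = y" using assms by (intro psi_inv_psi) auto
  then show ?thesis using assms psi_inv_mono[OF assms(1,2), of w "psi \<kappa> \<delta> y"] by auto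
next
  case False
  then show ?thesis using assms psi_le_1[OF assms(1,2), of y] psi_inv_le[OF assms(1,2), of w] by auto
qed

lemma continuous_on_psi_inv: "\<kappa> > 0 \<Longrightarrow> continuous_on {0..} (psi_inv \<kappa> \<delta>)"
  unfolding psi_inv_def by (intro continuous_intros continuous_on_powr') auto

lemma has_real_derivative_psi_inv:
  "w > 0 \<Longrightarrow> (psi_inv \<kappa> \<delta> has_real_derivative \<delta> * ((1/\<kappa>) * w powr (1/\<kappa> - 1))) (at w)"
  unfolding psi_inv_def by (auto intro!: derivative_eq_intros)

lemma powr_diff_eq_mvt:
  fixes s t \<kappa> :: real
  assumes "0 \<le> s" "s < t" "\<kappa> > 0"
  obtains z where "s < z" "z < t" "t powr \<kappa> - s powr \<kappa> = (t - s) * (\<kappa> * z powr (\<kappa> - 1))"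
proof -
  have c: "continuous_on {s..t} (\<lambda>z. z powr \<kappa>)"
    using assms by (intro continuous_on_powr' continuous_intros) auto
  have d: "\<And>z. s < z \<Longrightarrow> z < t \<Longrightarrow> ((\<lambda>z. z powr \<kappa>) has_real_derivative \<kappa> * z powr (\<kappa> - 1)) (at z)"
    using assms by (auto intro!: has_real_derivative_powr)
  from MVT[OF assms(2) c] d obtain l z where "s < z" "z < t" "DERIV (\<lambda>z. z powr \<kappa>) z :> l"
     "t powr \<kappa> - s powr \<kappa> = (t - s) * l"
    by (metis real_differentiable_def)
  moreover have "l = \<kappa> * z powr (\<kappa> - 1)"
    using d[OF \<open>s<z\<close> \<open>z<t\<close>] calculation(3) DERIV_unique by blast
  ultimately show ?thesis using that by blast
qed

lemma powr_diff_ge: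
  fixes s t \<kappa> :: real
  assumes "0 \<le> s" "s \<le> t" "t \<le> 1" "\<kappa> > 0" "\<kappa> < 1"
  shows "\<kappa> * (t - s) \<le> t powr \<kappa> - s powr \<kappa>"
proof (cases "s = t")
  case False
  then have "s < t" using assms(2) by simp
  then obtain z where z: "s < z" "z < t" "t powr \<kappa> - s powr \<kappa> = (t - s) * (\<kappa> * z powr (\<kappa> - 1))"
    by (rule powr_diff_eq_mvt[OF assms(1) _ assms(4)])
  have "1 \<le> z powr (\<kappa> - 1)"
    using z assms powr_mono2'[of "\<kappa> - 1" z 1] by auto
  then have "\<kappa> * (t - s) \<le> (t - s) * (\<kappa> * z powr (\<kappa> - 1))"
    using z assms by (simp add: mult_left_mono)
  then show ?thesis using z by simp
qed simp

lemma powr_diff_le: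
  fixes s t \<kappa> :: real
  assumes "0 < s" "s \<le> t" "\<kappa> > 0" "\<kappa> < 1"
  shows "t powr \<kappa> - s powr \<kappa> \<le> \<kappa> * s powr (\<kappa> - 1) * (t - s)"
proof (cases "s = t")
  case False
  then have "s < t" using assms(2) by simp
  then obtain z where z: "s < z" "z < t" "t powr \<kappa> - s powr \<kappa> = (t - s) * (\<kappa> * z powr (\<kappa> - 1))"
    by (rule powr_diff_eq_mvt[OF less_imp_le[OF assms(1)] _ assms(3)])
  have "z powr (\<kappa> - 1) \<le> s powr (\<kappa> - 1)"
    using z assms powr_mono2'[of "\<kappa> - 1" s z] by auto
  then have "(t - s) * (\<kappa> * z powr (\<kappa> - 1)) \<le> (t - s) * (\<kappa> * s powr (\<kappa> - 1))"
    using z assms by (intro mult_left_mono) auto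
  then show ?thesis using z by simp
qed simp

lemma psi_diff_ge:
  assumes "\<delta> > 0" "\<kappa> > 0" "\<kappa> < 1" "0 \<le> x" "x \<le> y" "y \<le> \<delta>"
  shows "\<kappa> * (y - x) / \<delta> \<le> psi \<kappa> \<delta> y - psi \<kappa> \<delta> x"
proof -
  have "\<kappa> * (y/\<delta> - x/\<delta>) \<le> (y/\<delta>) powr \<kappa> - (x/\<delta>) powr \<kappa>"
    using assms by (intro powr_diff_ge) (auto simp: divide_right_mono)
  moreover have "\<kappa> * (y/\<delta> - x/\<delta>) = \<kappa> * (y - x) / \<delta>"
    by (simp add: diff_divide_distrib right_diff_distrib)
  moreover have "psi \<kappa> \<delta> x = (x/\<delta>) powr \<kappa>" "psi \<kappa> \<delta> y = (y/\<delta>) powr \<kappa>"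
    using assms by (auto simp: psi_eq_powr_clamp min_def max_def)
  ultimately show ?thesis by simp
qed

definition psi_lipschitz_const :: "real \<Rightarrow> real \<Rightarrow> real \<Rightarrow> real" where
  "psi_lipschitz_const \<kappa> \<delta> a = \<kappa> / \<delta> * (min a \<delta> / \<delta>) powr (\<kappa> - 1)"

lemma psi_lipschitz_const_pos: "\<delta> > 0 \<Longrightarrow> \<kappa> > 0 \<Longrightarrow> 0 < a \<Longrightarrow> 0 < psi_lipschitz_const \<kappa> \<delta> a"
  by (simp add: psi_lipschitz_const_def)

lemma psi_diff_le:
  assumes "\<delta> > 0" "\<kappa> > 0" "\<kappa> < 1" "0 < a" "a \<le> x" "x \<le> y"
  shows "psi \<kappa> \<delta> y - psi \<kappa> \<delta> x \<le> psi_lipschitz_const \<kappa> \<delta> a * (y - x)"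
proof (cases "x \<ge> \<delta>")
  case True
  then have "psi \<kappa> \<delta> y - psi \<kappa> \<delta> x = 0"
    using assms by (simp add: psi_eq_1)
  then show ?thesis
    using assms psi_lipschitz_const_pos[of \<delta> \<kappa> a] by simp
next
  case False
  define y' where "y' = min y \<delta>"
  have xy': "x \<le> y'" "y' - x \<le> y - x" using False assms by (auto simp: y'_def)
  have "psi \<kappa> \<delta> y - psi \<kappa> \<delta> x = (y'/\<delta>) powr \<kappa> - (x/\<delta>) powr \<kappa>"
    using assms False by (auto simp: psi_eq_powr_clamp min_def max_def y'_def)
  also have "\<dots> \<le> \<kappa> * (x/\<delta>) powr (\<kappa> - 1) * (y'/\<delta> - x/\<delta>)"
    using assms xy' by (intro powr_diff_le) (auto simp: divide_right_mono)
  also have "\<dots> = \<kappa> / \<delta> * (x/\<delta>) powr (\<kappa> - 1) * (y' - x)"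
    by (simp add: diff_divide_distrib field_simps)
  also have "\<dots> \<le> \<kappa> / \<delta> * (a/\<delta>) powr (\<kappa> - 1) * (y - x)"
  proof (intro mult_mono)
    show "(x/\<delta>) powr (\<kappa> - 1) \<le> (a/\<delta>) powr (\<kappa> - 1)"
      using assms by (intro powr_mono2') (auto simp: divide_right_mono)
  qed (use assms xy' in auto)
  also have "\<dots> = psi_lipschitz_const \<kappa> \<delta> a * (y - x)"
    using False assms by (simp add: psi_lipschitz_const_def)
  finally show ?thesis .
qed

lemma has_real_derivative_integral_from_0:
  fixes g :: "real \<Rightarrow> real"
  assumes "continuous_on UNIV g" "0 < x"
  shows "((\<lambda>y. integral {0..y} g) has_real_derivative g x) (at x)"
proof -
  have "((\<lambda>y. integral {0..y} g) has_real_derivative g x) (at x within {0..x+1})"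
    using assms by (intro integral_has_real_derivative continuous_on_subset[OF assms(1)]) auto
  then show ?thesis using assms by (simp add: at_within_Icc_at)
qed

lemma continuous_on_integral_from_0:
  fixes g :: "real \<Rightarrow> real"
  assumes "continuous_on UNIV g"
  shows "continuous_on {0<..} (\<lambda>y. integral {0..y} g)"
proof (intro continuous_at_imp_continuous_on ballI)
  fix x :: real assume "x \<in> {0<..}"
  then show "isCont (\<lambda>y. integral {0..y} g) x"
    using DERIV_isCont[OF has_real_derivative_integral_from_0[OF assms]] by simp
qed

lemma integral_substitution_by_parts:
  fixes f u u' G g H H' :: "real \<Rightarrow> real"
  assumes ab: "a \<le> b" "u a \<le> u b" "u ` {a..b} \<subseteq> {c..d}"
    and f: "continuous_on {c..d} f" "\<And>x. x \<in> {a..b} \<Longrightarrow> f (u x) = g (u x) * H x"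
    and u: "continuous_on {a..b} u" "\<And>x. x \<in> {a<..<b} \<Longrightarrow> (u has_real_derivative u' x) (at x)"
    and G: "continuous_on {a..b} (\<lambda>x. G (u x))"
      "\<And>x. x \<in> {a<..<b} \<Longrightarrow> (G has_real_derivative g (u x)) (at (u x))"
    and H: "continuous_on {a..b} H" "\<And>x. x \<in> {a<..<b} \<Longrightarrow> (H has_real_derivative H' x) (at x)"
      "continuous_on {a..b} H'"
  shows "integral {u a..u b} f = G (u b) * H b - G (u a) * H a - integral {a..b} (\<lambda>x. G (u x) * H' x)"
proof -
  have "((\<lambda>x. u' x *\<^sub>R f (u x)) has_integral integral {u a..u b} f) {a..b}"
  proof (rule has_integral_substitution_strong[where s="{a, b}"])
    show "(u has_real_derivative u' x) (at x within {a..b})" if "x \<in> {a..b} - {a, b}" for x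
      using u(2)[of x] that by (auto intro: has_field_derivative_at_within)
  qed (use ab f u in auto)
  then have subst: "((\<lambda>x. g (u x) * u' x * H x) has_integral integral {u a..u b} f) {a..b}"
    by (rule has_integral_eq[rotated]) (auto simp: f(2))
  have ftc: "((\<lambda>x. g (u x) * u' x * H x + G (u x) * H' x) has_integral
          G (u b) * H b - G (u a) * H a) {a..b}"
  proof (rule fundamental_theorem_of_calculus_interior_strong[where S="{}"])
    show "continuous_on {a..b} (\<lambda>x. G (u x) * H x)"
      by (intro continuous_intros G H)
    fix x assume x: "x \<in> {a<..<b} - {}"
    have "((\<lambda>x. G (u x) * H x) has_real_derivative g (u x) * u' x * H x + G (u x) * H' x) (at x)"
      using DERIV_mult[OF DERIV_chain2[OF G(2) u(2)] H(2)] x by (simp add: algebra_simps)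
    then show "((\<lambda>x. G (u x) * H x) has_vector_derivative g (u x) * u' x * H x + G (u x) * H' x) (at x)"
      by (simp add: has_real_derivative_iff_has_vector_derivative)
  qed (use ab in auto)
  have "(\<lambda>x. G (u x) * H' x) integrable_on {a..b}"
    by (intro integrable_continuous_real continuous_intros G H)
  from has_integral_diff[OF ftc integrable_integral[OF this]]
  have "((\<lambda>x. g (u x) * u' x * H x) has_integral
      G (u b) * H b - G (u a) * H a - integral {a..b} (\<lambda>x. G (u x) * H' x)) {a..b}"
    by simp
  then show ?thesis by (rule has_integral_unique[OF subst])
qed

text \<open>On the window \<open>[\<theta>, \<theta> + \<delta>]\<close> substitute \<open>t = \<theta> + psi_inv w\<close>, so that \<open>psi (t - \<theta>) = w\<close>,
  and integrate by parts against a primitive of \<open>g\<close>.\<close>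

lemma integral_psi_window:
  fixes g H H' :: "real \<Rightarrow> real"
  assumes d: "\<delta> > 0" and k: "\<kappa> > 0" and g: "continuous_on UNIV g" and th: "0 \<le> \<theta>"
    and H: "\<And>w. 0 \<le> w \<Longrightarrow> w \<le> 1 \<Longrightarrow> (H has_real_derivative H' w) (at w)"
      "continuous_on {0..1} H'"
  shows "integral {\<theta>..\<theta> + \<delta>} (\<lambda>t. g t * H (psi \<kappa> \<delta> (t - \<theta>)))
       = integral {0..\<theta> + \<delta>} g * H 1 - integral {0..\<theta>} g * H 0
         - integral {0..1} (\<lambda>w. integral {0..\<theta> + psi_inv \<kappa> \<delta> w} g * H' w)"
proof -
  define G where "G x = integral {0..x} g" for x
  define u where "u w = \<theta> + psi_inv \<kappa> \<delta> w" for w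
  have Hc: "continuous_on {0..1} H"
    by (rule DERIV_continuous_on[where D=H']) (use H in \<open>auto intro: has_field_derivative_at_within\<close>)
  have "continuous_on UNIV (\<lambda>t. H (psi \<kappa> \<delta> (t - \<theta>)))"
    using d k by (intro continuous_on_compose2[OF Hc] continuous_intros) (auto intro: psi_nonneg psi_le_1)
  then have fc: "continuous_on UNIV (\<lambda>t. g t * H (psi \<kappa> \<delta> (t - \<theta>)))"
    by (intro continuous_intros g)
  have u_range: "0 \<le> w \<Longrightarrow> w \<le> 1 \<Longrightarrow> \<theta> \<le> u w \<and> u w \<le> \<theta> + \<delta>" for w
    using psi_inv_nonneg[OF d] psi_inv_le[OF d k] by (auto simp: u_def)
  have uc: "continuous_on {0..1} u"
    unfolding u_def by (intro continuous_intros continuous_on_subset[OF continuous_on_psi_inv[OF k]]) auto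
  have Gu: "continuous_on {0..1} (\<lambda>w. G (u w))"
  proof (rule continuous_on_compose2[OF _ uc])
    show "continuous_on {0..\<theta> + \<delta>} G" unfolding G_def
      by (intro indefinite_integral_continuous_1 integrable_continuous_real continuous_on_subset[OF g]) auto
  qed (use u_range th in fastforce)+
  have "integral {u 0..u 1} (\<lambda>t. g t * H (psi \<kappa> \<delta> (t - \<theta>)))
      = G (u 1) * H 1 - G (u 0) * H 0 - integral {0..1} (\<lambda>w. G (u w) * H' w)"
  proof (rule integral_substitution_by_parts[where c=\<theta> and d="\<theta> + \<delta>" and g=g])
    show "g (u w) * H (psi \<kappa> \<delta> (u w - \<theta>)) = g (u w) * H w" if "w \<in> {0..1}" for w
      using psi_psi_inv[OF d k] that by (simp add: u_def)
    show "(u has_real_derivative \<delta> * ((1/\<kappa>) * w powr (1/\<kappa> - 1))) (at w)" if "w \<in> {0<..<1}" for w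
      unfolding u_def using that by (auto intro!: derivative_eq_intros has_real_derivative_psi_inv)
    show "(G has_real_derivative g (u w)) (at (u w))" if "w \<in> {0<..<1}" for w
      unfolding G_def using that psi_inv_pos[of \<delta> w \<kappa>] d th
      by (intro has_real_derivative_integral_from_0 g) (auto simp: u_def)
  qed (use d th u_range uc Gu Hc H in \<open>auto intro: continuous_on_subset[OF fc] psi_inv_mono simp: u_def\<close>)
  then show ?thesis by (simp add: u_def G_def)
qed

lemma integral_mult_comp_psi:
  fixes g H H' :: "real \<Rightarrow> real"
  assumes d: "\<delta> > 0" and k: "\<kappa> > 0" and g: "continuous_on UNIV g"
    and th: "0 \<le> \<theta>" "\<theta> + \<delta> \<le> \<tau>"
    and H: "\<And>w. 0 \<le> w \<Longrightarrow> w \<le> 1 \<Longrightarrow> (H has_real_derivative H' w) (at w)"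
      "continuous_on {0..1} H'"
  shows "integral {0..\<tau>} (\<lambda>t. g t * H (psi \<kappa> \<delta> (t - \<theta>)))
       = H 1 * integral {0..\<tau>} g
         - integral {0..1} (\<lambda>w. integral {0..\<theta> + psi_inv \<kappa> \<delta> w} g * H' w)"
proof -
  define f where "f t = g t * H (psi \<kappa> \<delta> (t - \<theta>))" for t
  have Hc: "continuous_on {0..1} H"
    by (rule DERIV_continuous_on[where D=H']) (use H in \<open>auto intro: has_field_derivative_at_within\<close>)
  have "continuous_on UNIV (\<lambda>t. H (psi \<kappa> \<delta> (t - \<theta>)))"
    using d k by (intro continuous_on_compose2[OF Hc] continuous_intros) (auto intro: psi_nonneg psi_le_1)
  then have fc: "continuous_on UNIV f" unfolding f_def by (intro continuous_intros g)
  have fi: "f integrable_on {a..b}" and gi: "g integrable_on {a..b}" for a b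
    by (intro integrable_continuous_real continuous_on_subset[OF fc] continuous_on_subset[OF g]; simp)+
  have "integral {0..\<tau>} f = integral {0..\<theta>} f + integral {\<theta>..\<theta>+\<delta>} f + integral {\<theta>+\<delta>..\<tau>} f"
    using Henstock_Kurzweil_Integration.integral_combine[of 0 \<theta> \<tau>, OF _ _ fi]
      Henstock_Kurzweil_Integration.integral_combine[of \<theta> "\<theta>+\<delta>" \<tau>, OF _ _ fi] th d
    by simp
  moreover have "integral {0..\<theta>} f = integral {0..\<theta>} g * H 0"
  proof -
    have "integral {0..\<theta>} f = integral {0..\<theta>} (\<lambda>t. g t * H 0)"
      by (rule integral_cong) (auto simp: f_def psi_eq_0[OF _ d])
    then show ?thesis by simp
  qed
  moreover have "integral {\<theta>+\<delta>..\<tau>} f = (integral {0..\<tau>} g - integral {0..\<theta>+\<delta>} g) * H 1"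
  proof -
    have "integral {\<theta>+\<delta>..\<tau>} f = integral {\<theta>+\<delta>..\<tau>} (\<lambda>t. g t * H 1)"
      by (rule integral_cong) (auto simp: f_def psi_eq_1)
    moreover have "integral {0..\<theta>+\<delta>} g + integral {\<theta>+\<delta>..\<tau>} g = integral {0..\<tau>} g"
      using th d by (intro Henstock_Kurzweil_Integration.integral_combine gi) auto
    ultimately show ?thesis by simp
  qed
  ultimately show ?thesis
    using integral_psi_window[OF d k g th(1) H] unfolding f_def by (simp add: algebra_simps)
qed

lemma has_real_derivative_integral_shifted:
  fixes g H' v :: "real \<Rightarrow> real" and U :: "real set"
  assumes g: "continuous_on UNIV g" and H': "continuous_on {0..1} H'"
    and v: "continuous_on {0..1} v"
    and U: "open U" "convex U" "x0 \<in> U"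
    and pos: "\<And>x t. x \<in> U \<Longrightarrow> t \<in> {0..1} \<Longrightarrow> 0 < x + v t"
  shows "((\<lambda>x. integral {0..1} (\<lambda>t. integral {0..x + v t} g * H' t)) has_real_derivative
           integral {0..1} (\<lambda>t. g (x0 + v t) * H' t)) (at x0)"
proof -
  define G where "G x = integral {0..x} g" for x
  have "((\<lambda>x. integral (cbox 0 1) (\<lambda>t. G (x + v t) * H' t)) has_field_derivative
           integral (cbox 0 1) (\<lambda>t. g (x0 + v t) * H' t)) (at x0 within U)"
  proof (rule leibniz_rule_field_derivative[where fx="\<lambda>x t. g (x + v t) * H' t"])
    fix x t assume xt: "x \<in> U" "t \<in> cbox (0::real) 1"
    have "((\<lambda>x. x + v t) has_real_derivative 1) (at x)"
      by (auto intro!: derivative_eq_intros)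
    from DERIV_chain2[OF has_real_derivative_integral_from_0[OF g pos] this] xt
    have "((\<lambda>x. G (x + v t)) has_real_derivative g (x + v t)) (at x)"
      by (simp add: G_def)
    then show "((\<lambda>x. G (x + v t) * H' t) has_real_derivative g (x + v t) * H' t) (at x within U)"
      by (auto intro: has_field_derivative_at_within DERIV_cmult_right)
  next
    fix x assume x: "x \<in> U"
    have "continuous_on {0..1} (\<lambda>t. x + v t)"
      by (intro continuous_intros v)
    then have "continuous_on {0..1} (\<lambda>t. G (x + v t))"
      by (rule continuous_on_compose2[OF continuous_on_integral_from_0[OF g, folded G_def]])
         (use pos[OF x] in auto)
    then show "(\<lambda>t. G (x + v t) * H' t) integrable_on cbox 0 1"
      unfolding cbox_interval by (intro integrable_continuous_real continuous_intros H')
  next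
    have "continuous_on (U \<times> {0..1}) (\<lambda>p. g (fst p + v (snd p)) * H' (snd p))"
      by (intro continuous_intros continuous_on_compose2[OF g] continuous_on_compose2[OF H']
            continuous_on_compose2[OF v continuous_on_snd]) auto
    then show "continuous_on (U \<times> cbox 0 1) (\<lambda>(x, t). g (x + v t) * H' t)"
      by (simp add: case_prod_beta')
  qed (use U in auto)
  then show ?thesis by (simp only: G_def at_within_open[OF U(3) U(1)] cbox_interval)
qed

lemma integral_linear_combination:
  fixes f g :: "real \<Rightarrow> real"
  assumes "f integrable_on A" "g integrable_on A"
  shows "integral A (\<lambda>x. a * f x + b * g x) = a * integral A f + b * integral A g"
proof -
  have "(\<lambda>x. a * f x) integrable_on A" "(\<lambda>x. b * g x) integrable_on A"
    using integrable_on_cmult_left[OF assms(1), of a] integrable_on_cmult_left[OF assms(2), of b] by auto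
  then have "integral A (\<lambda>x. a * f x + b * g x) = integral A (\<lambda>x. a * f x) + integral A (\<lambda>x. b * g x)"
    by (rule integral_add)
  then show ?thesis by simp
qed

lemma continuous_on_of_has_real_derivative:
  "(\<And>y. y \<in> U \<Longrightarrow> (f has_real_derivative D y) (at y)) \<Longrightarrow> continuous_on U f"
  by (intro continuous_at_imp_continuous_on ballI DERIV_isCont) auto

lemma deriv_zero_of_sign_change:
  fixes f f' :: "real \<Rightarrow> real"
  assumes "a < b" and f: "\<And>x. x \<in> {a..b} \<Longrightarrow> (f has_real_derivative f' x) (at x)"
    and "f' a < 0" "f' b > 0"
  obtains p where "p \<in> {a<..<b}" "f' p = 0"
proof -
  have "continuous_on {a..b} f"
    using f by (rule continuous_on_of_has_real_derivative)
  then obtain p where p: "p \<in> {a..b}" "\<And>y. y \<in> {a..b} \<Longrightarrow> f p \<le> f y"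
    using continuous_attains_inf[OF compact_Icc, of a b f] \<open>a < b\<close> by auto
  have "p \<noteq> a"
  proof
    assume "p = a"
    then obtain e where e: "e > 0" "\<And>t. 0 < t \<Longrightarrow> t < e \<Longrightarrow> f (p + t) < f p"
      using DERIV_neg_dec_right[OF f[OF p(1)]] \<open>f' a < 0\<close> by blast
    have "f (p + min (e/2) (b - a)) < f p" using e \<open>a < b\<close> by (intro e(2)) auto
    moreover have "f p \<le> f (p + min (e/2) (b - a))" using e \<open>p = a\<close> \<open>a < b\<close> by (intro p(2)) auto
    ultimately show False by simp
  qed
  moreover have "p \<noteq> b"
  proof
    assume "p = b"
    then obtain e where e: "e > 0" "\<And>t. 0 < t \<Longrightarrow> t < e \<Longrightarrow> f (p - t) < f p"
      using DERIV_pos_inc_left[OF f[OF p(1)]] \<open>f' b > 0\<close> by blast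
    have "f (p - min (e/2) (b - a)) < f p" using e \<open>a < b\<close> by (intro e(2)) auto
    moreover have "f p \<le> f (p - min (e/2) (b - a))" using e \<open>p = b\<close> \<open>a < b\<close> by (intro p(2)) auto
    ultimately show False by simp
  qed
  ultimately have "p \<in> {a<..<b}" using p(1) by auto
  moreover from this have "f' p = 0"
    by (intro DERIV_local_min[OF f[OF p(1)], of "min (p - a) (b - p)"]) (auto intro!: p(2))
  ultimately show ?thesis by (rule that)
qed

lemma min_of_deriv_sign:
  fixes f D :: "real \<Rightarrow> real"
  assumes U: "is_interval U" "p \<in> U" "x \<in> U"
    and f: "\<And>y. y \<in> U \<Longrightarrow> (f has_real_derivative D y) (at y)"
    and sign: "\<And>y. y \<in> U \<Longrightarrow> y \<le> p \<Longrightarrow> D y \<le> 0" "\<And>y. y \<in> U \<Longrightarrow> p \<le> y \<Longrightarrow> 0 \<le> D y"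
  shows "f p \<le> f x"
proof (cases "p \<le> x")
  case True
  show ?thesis
  proof (rule DERIV_nonneg_imp_nondecreasing[of p x f, OF True])
    fix y assume "p \<le> y" "y \<le> x"
    then show "\<exists>d. (f has_real_derivative d) (at y) \<and> d \<ge> 0"
      using f sign(2) mem_is_interval_1_I[OF U(1,2,3)] by blast
  qed
next
  case False
  show ?thesis
  proof (rule DERIV_nonpos_imp_nonincreasing[of x p f])
    fix y assume "x \<le> y" "y \<le> p"
    then show "\<exists>d. (f has_real_derivative d) (at y) \<and> d \<le> 0"
      using f sign(1) mem_is_interval_1_I[OF U(1,3,2)] by blast
  qed (use False in simp)
qed

lemma strict_min_of_deriv_sign:
  fixes f D :: "real \<Rightarrow> real"
  assumes U: "is_interval U" "p \<in> U" "x \<in> U" "x \<noteq> p"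
    and f: "\<And>y. y \<in> U \<Longrightarrow> (f has_real_derivative D y) (at y)"
    and sign: "\<And>y. y \<in> U \<Longrightarrow> y < p \<Longrightarrow> D y < 0" "\<And>y. y \<in> U \<Longrightarrow> p < y \<Longrightarrow> 0 < D y"
  shows "f p < f x"
proof (cases "p < x")
  case True
  have px: "{p..x} \<subseteq> U" using mem_is_interval_1_I[OF U(1,2,3)] by auto
  show ?thesis
  proof (rule DERIV_pos_imp_increasing_open[of p x f, OF True])
    show "continuous_on {p..x} f" using f px by (intro continuous_on_of_has_real_derivative[where D=D]) auto
    show "\<exists>d. (f has_real_derivative d) (at y) \<and> 0 < d" if "p < y" "y < x" for y
    proof -
      have "y \<in> U" using that px by auto
      then show ?thesis using f sign(2) that(1) by blast
    qed
  qed
next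
  case False
  then have xp: "x < p" using U(4) by simp
  have "{x..p} \<subseteq> U" using mem_is_interval_1_I[OF U(1,3,2)] by auto
  show ?thesis
  proof (rule DERIV_neg_imp_decreasing_open[of x p f, OF xp])
    show "continuous_on {x..p} f" using f \<open>{x..p} \<subseteq> U\<close> by (intro continuous_on_of_has_real_derivative[where D=D]) auto
    show "\<exists>d. (f has_real_derivative d) (at y) \<and> d < 0" if "x < y" "y < p" for y
    proof -
      have "y \<in> U" using that \<open>{x..p} \<subseteq> U\<close> by auto
      then show ?thesis using f sign(1) that(2) by blast
    qed
  qed
qed

text \<open>Comparing \<open>f\<close> with the parabolas \<open>m/2 (x - p)^2\<close> and \<open>M/2 (x - p)^2\<close>, both differences
  have derivatives of the right sign on either side of \<open>p\<close>.\<close>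

lemma quadratic_bounds_of_linear_bounds:
  fixes f D :: "real \<Rightarrow> real"
  assumes U: "is_interval U" "p \<in> U" "x \<in> U"
    and f: "\<And>y. y \<in> U \<Longrightarrow> (f has_real_derivative D y) (at y)"
    and sign: "\<And>y. y \<in> U \<Longrightarrow> y \<le> p \<Longrightarrow> D y \<le> 0" "\<And>y. y \<in> U \<Longrightarrow> p \<le> y \<Longrightarrow> 0 \<le> D y"
    and bounds: "\<And>y. y \<in> U \<Longrightarrow> m * \<bar>y - p\<bar> \<le> \<bar>D y\<bar> \<and> \<bar>D y\<bar> \<le> M * \<bar>y - p\<bar>"
  shows "m / 2 * (x - p)^2 \<le> f x - f p \<and> f x - f p \<le> M / 2 * (x - p)^2"
proof -
  have left: "M * (y - p) \<le> D y \<and> D y \<le> m * (y - p)" if "y \<in> U" "y \<le> p" for y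
  proof -
    have "\<bar>D y\<bar> = - D y" "\<bar>y - p\<bar> = p - y" using sign(1)[OF that] that(2) by auto
    then show ?thesis using bounds[OF that(1)] by (simp add: algebra_simps)
  qed
  have right: "m * (y - p) \<le> D y \<and> D y \<le> M * (y - p)" if "y \<in> U" "p \<le> y" for y
    using bounds[OF that(1)] sign(2)[OF that] that(2) by simp
  have sq: "((\<lambda>y. (y - p)^2) has_real_derivative 2 * (y - p)) (at y)" for y
    by (auto intro!: derivative_eq_intros)
  have "(\<lambda>y. f y - m / 2 * (y - p)^2) p \<le> (\<lambda>y. f y - m / 2 * (y - p)^2) x"
  proof (rule min_of_deriv_sign[OF U])
    show "((\<lambda>y. f y - m / 2 * (y - p)^2) has_real_derivative D y - m * (y - p)) (at y)" if "y \<in> U" for y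
      by (rule DERIV_cong[OF DERIV_diff[OF f[OF that] DERIV_cmult[OF sq, of "m / 2"]]]) (simp add: algebra_simps)
  qed (use left right in force)+
  moreover have "(\<lambda>y. M / 2 * (y - p)^2 - f y) p \<le> (\<lambda>y. M / 2 * (y - p)^2 - f y) x"
  proof (rule min_of_deriv_sign[OF U])
    show "((\<lambda>y. M / 2 * (y - p)^2 - f y) has_real_derivative M * (y - p) - D y) (at y)" if "y \<in> U" for y
      by (rule DERIV_cong[OF DERIV_diff[OF DERIV_cmult[OF sq, of "M / 2"] f[OF that]]]) (simp add: algebra_simps)
  qed (use left right in force)+
  ultimately show ?thesis by simp
qed

lemma abs_bounds_of_local_bounds:
  fixes D :: "real \<Rightarrow> real"
  assumes "D p = 0" "m0 \<ge> 0"
    and "\<And>x y. p - \<eta> \<le> x \<Longrightarrow> x \<le> y \<Longrightarrow> y \<le> p + \<eta> \<Longrightarrow> m0 * (y - x) \<le> D y - D x \<and> D y - D x \<le> M0 * (y - x)"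
    and "\<bar>x - p\<bar> \<le> \<eta>"
  shows "m0 * \<bar>x - p\<bar> \<le> \<bar>D x\<bar> \<and> \<bar>D x\<bar> \<le> M0 * \<bar>x - p\<bar>"
proof (cases "p \<le> x")
  case True
  moreover have "0 \<le> m0 * (x - p)" using True assms(2) by simp
  ultimately show ?thesis using assms(1,4) assms(3)[of p x] by (auto simp: abs_if)
next
  case False
  moreover have "0 \<le> m0 * (p - x)" using False assms(2) by simp
  ultimately show ?thesis using assms(1,4) assms(3)[of x p] by (auto simp: abs_if)
qed

text \<open>Near the zero \<open>p\<close> the bounds are the local ones; away from it, monotonicity keeps
  \<open>\<bar>D\<bar>\<close> above its value at distance \<open>\<eta>\<close>, and boundedness of \<open>D\<close> and of the domain does the rest.\<close>

lemma linear_bounds_of_local_bounds: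
  fixes D :: "real \<Rightarrow> real"
  assumes mono: "\<And>x y. x \<le> y \<Longrightarrow> D x \<le> D y" and "D p = 0"
    and local: "\<eta> > 0" "m0 > 0" "M0 > 0"
      "\<And>x y. p - \<eta> \<le> x \<Longrightarrow> x \<le> y \<Longrightarrow> y \<le> p + \<eta> \<Longrightarrow> m0 * (y - x) \<le> D y - D x \<and> D y - D x \<le> M0 * (y - x)"
    and global: "R > 0" "\<And>x. x \<in> U \<Longrightarrow> \<bar>D x\<bar> \<le> B \<and> \<bar>x - p\<bar> \<le> R"
  obtains m M where "m > 0" "M > 0" "\<And>x. x \<in> U \<Longrightarrow> m * \<bar>x - p\<bar> \<le> \<bar>D x\<bar> \<and> \<bar>D x\<bar> \<le> M * \<bar>x - p\<bar>"
proof
  have near: "m0 * \<bar>x - p\<bar> \<le> \<bar>D x\<bar> \<and> \<bar>D x\<bar> \<le> M0 * \<bar>x - p\<bar>" if "\<bar>x - p\<bar> \<le> \<eta>" for x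
    using abs_bounds_of_local_bounds[OF \<open>D p = 0\<close> less_imp_le[OF local(2)] local(4) that] .
  have far: "m0 * \<eta> \<le> \<bar>D x\<bar>" if "\<eta> \<le> \<bar>x - p\<bar>" for x
  proof (cases "p \<le> x")
    case True
    then have "m0 * \<eta> \<le> D (p + \<eta>)" "D (p + \<eta>) \<le> D x"
      using near[of "p + \<eta>"] that local(1) \<open>D p = 0\<close> mono[of "p + \<eta>" x] mono[of p "p + \<eta>"]
      by auto
    then show ?thesis by simp
  next
    case False
    then have "m0 * \<eta> \<le> - D (p - \<eta>)" "D x \<le> D (p - \<eta>)"
      using near[of "p - \<eta>"] that local(1) \<open>D p = 0\<close> mono[of x "p - \<eta>"] mono[of "p - \<eta>" p]
      by auto
    then show ?thesis by simp
  qed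
  show "0 < min m0 (m0 * \<eta> / R)" using local global by simp
  show "0 < max M0 (B / \<eta>)" using local by simp
  fix x assume x: "x \<in> U"
  show "min m0 (m0 * \<eta> / R) * \<bar>x - p\<bar> \<le> \<bar>D x\<bar> \<and> \<bar>D x\<bar> \<le> max M0 (B / \<eta>) * \<bar>x - p\<bar>"
  proof (cases "\<bar>x - p\<bar> \<le> \<eta>")
    case True
    then show ?thesis
      using near[OF True] mult_right_mono[OF min.cobounded1, of "\<bar>x - p\<bar>" m0 "m0 * \<eta> / R"]
        mult_right_mono[OF max.cobounded1, of "\<bar>x - p\<bar>" M0 "B / \<eta>"] by linarith
  next
    case False
    have "min m0 (m0 * \<eta> / R) * \<bar>x - p\<bar> \<le> m0 * \<eta> / R * R"
      using global x local by (intro mult_mono) auto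
    also have "\<dots> \<le> \<bar>D x\<bar>" using far[of x] False global(1) by simp
    finally have lower: "min m0 (m0 * \<eta> / R) * \<bar>x - p\<bar> \<le> \<bar>D x\<bar>" .
    have "\<bar>D x\<bar> \<le> B / \<eta> * \<eta>" using global(2)[OF x] local(1) by simp
    also have "\<dots> \<le> max M0 (B / \<eta>) * \<bar>x - p\<bar>"
      using False global(2)[OF x] local(1,3) by (intro mult_mono) auto
    finally show ?thesis using lower by simp
  qed
qed

locale kl_setting =
  fixes S lam0 \<kappa> \<delta> \<tau> h th0 \<alpha> \<beta> :: real
  assumes S_pos: "S > 0" and lam0_pos: "lam0 > 0" and \<kappa>_pos: "0 < \<kappa>" and \<kappa>_less: "\<kappa> < 1/2"
    and \<delta>_pos: "\<delta> > 0" and window: "\<alpha> < \<beta>" "0 \<le> \<alpha> - \<delta>" "\<beta> + \<delta> \<le> \<tau> - \<delta>"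
    and th0: "\<alpha> < th0" "th0 < \<beta>"
    and h_gt: "h > S / ln (1 + S / lam0) - S - lam0"
begin

abbreviation "J_KL \<equiv> JKL S lam0 \<kappa> \<delta> \<tau> th0 h"

definition "Theta = {\<alpha> - \<delta><..<\<beta> + \<delta>}"
definition "L = ln (1 + S / lam0)"

text \<open>On the window the fitted intensity is \<open>S * w + lam0\<close> with \<open>w = psi (t - th)\<close>;
  \<open>ell w\<close> is its logarithm relative to \<open>lam0\<close>, and \<open>ell'\<close> the derivative in \<open>w\<close>.\<close>

definition "ell w = ln (S * w + lam0) - ln lam0"
definition "ell' w = S / (S * w + lam0)"
definition "lstar t = lam_star S h lam0 \<kappa> \<delta> th0 t"

text \<open>\<open>J'\<close> is the derivative of \<open>JKL\<close> in closed form: the true intensity is affine in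
  \<open>psi (t - th0)\<close>, so the derivative is affine in \<open>F (th - th0)\<close>.\<close>

definition "F c = integral {0..1} (\<lambda>w. psi \<kappa> \<delta> (c + psi_inv \<kappa> \<delta> w) * ell' w)"
definition "J' th = (S + h) * F (th - th0) - (S - lam0 * L)"

lemma L_pos: "0 < L" and L_less: "L < S / lam0"
  using S_pos lam0_pos ln_add_one_self_less_self[of "S / lam0"] by (auto simp: L_def intro!: ln_gt_zero)

lemma lam0_L_less: "lam0 * L < S"
  using L_less lam0_pos by (simp add: field_simps)

lemma S_h_pos: "S + h > 0"
proof -
  have "lam0 < S / L" using lam0_L_less L_pos by (simp add: field_simps)
  then show ?thesis using h_gt unfolding L_def by linarith
qed

lemma S_h_lam0_L_greater: "S < (S + h + lam0) * L"
proof -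
  have "S / L < S + h + lam0" using h_gt unfolding L_def by simp
  then show ?thesis using L_pos by (simp add: field_simps)
qed

lemma intensity_pos: "0 \<le> w \<Longrightarrow> 0 < S * w + lam0"
  using S_pos lam0_pos by (simp add: add_nonneg_pos)

lemma ell'_pos: "0 \<le> w \<Longrightarrow> 0 < ell' w"
  using S_pos intensity_pos by (simp add: ell'_def)

lemma ell'_le: "0 \<le> w \<Longrightarrow> ell' w \<le> S / lam0"
  using S_pos lam0_pos by (simp add: ell'_def frac_le)

lemma ell'_ge: "0 \<le> w \<Longrightarrow> w \<le> 1 \<Longrightarrow> S / (S + lam0) \<le> ell' w"
  unfolding ell'_def using S_pos lam0_pos intensity_pos[of w] mult_left_le[of w S]
  by (intro divide_left_mono) auto

lemma continuous_on_ell': "continuous_on {0..1} ell'"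
  unfolding ell'_def using intensity_pos
  by (intro continuous_intros) (auto simp: less_imp_neq[symmetric])

lemma has_real_derivative_ln_intensity:
  "0 \<le> w \<Longrightarrow> ((\<lambda>w. ln (S * w + lam0)) has_real_derivative ell' w) (at w)"
  unfolding ell'_def using intensity_pos[of w] by (auto intro!: derivative_eq_intros)

lemma has_real_derivative_ell: "0 \<le> w \<Longrightarrow> (ell has_real_derivative ell' w) (at w)"
  unfolding ell_def using DERIV_diff[OF has_real_derivative_ln_intensity DERIV_const] by simp

lemma continuous_on_ell: "continuous_on {0..1} ell"
  by (rule DERIV_continuous_on[where D=ell'])
     (auto intro: has_field_derivative_at_within has_real_derivative_ell)

lemma ell_0 [simp]: "ell 0 = 0"
  by (simp add: ell_def)

lemma ell_1 [simp]: "ell 1 = L"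
proof -
  have "ln ((S + lam0) / lam0) = ln (S + lam0) - ln lam0" using S_pos lam0_pos by (simp add: ln_div)
  moreover have "(S + lam0) / lam0 = 1 + S / lam0" using lam0_pos by (simp add: field_simps)
  ultimately show ?thesis by (simp add: L_def ell_def)
qed

lemma ell_diff_le:
  assumes "0 \<le> x" "x \<le> y"
  shows "ell y - ell x \<le> S / lam0 * (y - x)"
proof -
  have px: "0 < S * x + lam0" and py: "0 < S * y + lam0" using intensity_pos assms by auto
  have "ell y - ell x = ln ((S * y + lam0) / (S * x + lam0))"
    using px py by (simp add: ell_def ln_div)
  also have "\<dots> \<le> (S * y + lam0) / (S * x + lam0) - 1"
    using px py by (intro ln_le_minus_one) simp
  also have "\<dots> = S * (y - x) / (S * x + lam0)"
    using px by (simp add: field_simps)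
  also have "\<dots> \<le> S * (y - x) / lam0"
    using assms S_pos lam0_pos px by (intro divide_left_mono) (auto simp: add_nonneg_pos)
  finally show ?thesis by simp
qed

lemma has_integral_ell': "(ell' has_integral L) {0..1}"
proof -
  have "(ell' has_integral (ell 1 - ell 0)) {0..1}"
  proof (rule fundamental_theorem_of_calculus_interior_strong[where S="{}"])
    fix w :: real assume "w \<in> {0<..<1} - {}"
    then show "(ell has_vector_derivative ell' w) (at w)"
      using has_real_derivative_ell[of w] by (simp add: has_real_derivative_iff_has_vector_derivative)
  qed (auto intro: continuous_on_ell)
  then show ?thesis by simp
qed

lemma integral_ell' [simp]: "integral {0..1} ell' = L"
  using has_integral_ell' by blast

lemma continuous_on_lstar: "continuous_on A lstar"
  unfolding lstar_def lam_star_def using \<delta>_pos \<kappa>_pos by (intro continuous_intros)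

lemma lstar_pos: "0 < lstar t"
  using S_h_pos lam0_pos psi_nonneg[of \<kappa> \<delta> "t - th0"] unfolding lstar_def lam_star_def
  by (simp add: add_nonneg_pos)

lemma continuous_on_lam: "continuous_on A (lam S lam0 \<kappa> \<delta> th)"
  unfolding lam_def using \<delta>_pos \<kappa>_pos by (intro continuous_intros)

lemma lam_pos: "0 < lam S lam0 \<kappa> \<delta> th t"
  using S_pos lam0_pos psi_nonneg[of \<kappa> \<delta> "t - th"] unfolding lam_def
  by (simp add: add_nonneg_pos)

lemma Theta_bounds: "th \<in> Theta \<Longrightarrow> 0 < th \<and> th + \<delta> < \<tau>"
  using window by (auto simp: Theta_def)

lemma Theta_shift_pos: "th \<in> Theta \<Longrightarrow> 0 < th + psi_inv \<kappa> \<delta> t"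
  using Theta_bounds[of th] psi_inv_nonneg[OF \<delta>_pos, of \<kappa> t] by auto

lemma continuous_on_psi_inv_01: "continuous_on {0..1} (psi_inv \<kappa> \<delta>)"
  by (rule continuous_on_subset[OF continuous_on_psi_inv[OF \<kappa>_pos]]) auto

lemma JKL_eq_integral_0_tau:
  assumes "th \<in> Theta"
  shows "J_KL th
     = integral {0..\<tau>} (\<lambda>t. lam S lam0 \<kappa> \<delta> th t - lstar t
         - lstar t * ln (lam S lam0 \<kappa> \<delta> th t) + lstar t * ln (lstar t))"
proof -
  define e where "e t = lam S lam0 \<kappa> \<delta> th t - lstar t
      - lstar t * ln (lam S lam0 \<kappa> \<delta> th t) + lstar t * ln (lstar t)" for t
  have ec: "continuous_on UNIV e"
    unfolding e_def using lam_pos lstar_pos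
    by (intro continuous_intros continuous_on_lam continuous_on_lstar) (auto simp: less_imp_neq[symmetric])
  have ei: "e integrable_on {a..b}" for a b
    by (rule integrable_continuous_real[OF continuous_on_subset[OF ec]]) simp
  have integrand: "(lam S lam0 \<kappa> \<delta> th t / lstar t - 1 - ln (lam S lam0 \<kappa> \<delta> th t / lstar t)) * lstar t = e t" for t
  proof -
    have ln_quot: "ln (lam S lam0 \<kappa> \<delta> th t / lstar t) = ln (lam S lam0 \<kappa> \<delta> th t) - ln (lstar t)"
      using lam_pos[of th t] lstar_pos[of t] by (simp add: ln_div)
    show ?thesis unfolding e_def ln_quot using lstar_pos[of t] by (simp add: algebra_simps)
  qed
  define m where "m = min th th0"
  have m: "0 \<le> m" "m \<le> \<tau>" using Theta_bounds[OF assms] th0 window \<delta>_pos unfolding m_def by auto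
  have "J_KL th = integral {m..\<tau>} e"
    unfolding JKL_def m_def lstar_def[symmetric] integrand ..
  moreover have "integral {0..m} e = 0"
  proof -
    have "e t = 0" if "t \<in> {0..m}" for t
    proof -
      have "psi \<kappa> \<delta> (t - th) = 0" "psi \<kappa> \<delta> (t - th0) = 0"
        using that \<delta>_pos by (auto simp: m_def intro!: psi_eq_0)
      then show ?thesis by (simp add: e_def lam_def lstar_def lam_star_def)
    qed
    then have "integral {0..m} e = integral {0..m} (\<lambda>_. 0)"
      by (rule integral_cong)
    then show ?thesis by simp
  qed
  moreover have "integral {0..m} e + integral {m..\<tau>} e = integral {0..\<tau>} e"
    using m by (intro Henstock_Kurzweil_Integration.integral_combine ei) auto
  ultimately show ?thesis unfolding e_def by simp
qed

text \<open>The two terms of the integrand involving \<open>lam\<close> are layer-cake integrals; the one of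
  \<open>lam\<close> itself turns out to be affine in \<open>th\<close>.\<close>

lemma JKL_eq_layer_integral:
  obtains C where "\<And>th. th \<in> Theta \<Longrightarrow> J_KL th
    = C - S * th + integral {0..1} (\<lambda>w. integral {0..th + psi_inv \<kappa> \<delta> w} lstar * ell' w)"
proof
  fix th assume th: "th \<in> Theta"
  have r: "0 \<le> th" "th + \<delta> \<le> \<tau>" using Theta_bounds[OF th] by auto
  have i: "f integrable_on {0..\<tau>}" if "continuous_on UNIV f" for f :: "real \<Rightarrow> real"
    by (rule integrable_continuous_real) (rule continuous_on_subset[OF that], simp)
  have c1: "continuous_on UNIV (\<lambda>t. lstar t * ln (lam S lam0 \<kappa> \<delta> th t))"
    using lam_pos by (intro continuous_intros continuous_on_lam continuous_on_lstar)
      (auto simp: less_imp_neq[symmetric])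
  have c2: "continuous_on UNIV (\<lambda>t. lstar t * ln (lstar t))"
    using lstar_pos by (intro continuous_intros continuous_on_lstar) (auto simp: less_imp_neq[symmetric])
  have psi_inv_int: "psi_inv \<kappa> \<delta> integrable_on {0..1}"
    by (rule integrable_continuous_real[OF continuous_on_psi_inv_01])
  have "((\<lambda>w. S * w + lam0) has_real_derivative S) (at w)" for w
    by (auto intro!: derivative_eq_intros)
  then have "integral {0..\<tau>} (lam S lam0 \<kappa> \<delta> th) = (S + lam0) * \<tau>
      - integral {0..1} (\<lambda>w. integral {0..th + psi_inv \<kappa> \<delta> w} (\<lambda>_. 1) * S)"
    using integral_mult_comp_psi[OF \<delta>_pos \<kappa>_pos _ r, where g="\<lambda>_. 1" and H="\<lambda>w. S * w + lam0"
        and H'="\<lambda>_. S"] integral_const_real[of 0 \<tau> "1::real"] r \<delta>_pos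
    by (simp add: lam_def[abs_def] del: integral_const_real)
  also have "integral {0..1} (\<lambda>w. integral {0..th + psi_inv \<kappa> \<delta> w} (\<lambda>_. 1) * S)
      = integral {0..1} (\<lambda>w. S * th + S * psi_inv \<kappa> \<delta> w)"
    using r psi_inv_nonneg[OF \<delta>_pos] by (intro integral_cong) (simp add: algebra_simps)
  also have "\<dots> = S * th + S * integral {0..1} (psi_inv \<kappa> \<delta>)"
    using integral_linear_combination[OF Henstock_Kurzweil_Integration.integrable_const_ivl[of th 0 1]
        psi_inv_int, where a=S and b=S] by simp
  finally have I1: "integral {0..\<tau>} (lam S lam0 \<kappa> \<delta> th)
      = (S + lam0) * \<tau> - S * th - S * integral {0..1} (psi_inv \<kappa> \<delta>)"
    by simp
  have I2: "integral {0..\<tau>} (\<lambda>t. lstar t * ln (lam S lam0 \<kappa> \<delta> th t))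
      = ln (S + lam0) * integral {0..\<tau>} lstar
        - integral {0..1} (\<lambda>w. integral {0..th + psi_inv \<kappa> \<delta> w} lstar * ell' w)"
    using integral_mult_comp_psi[OF \<delta>_pos \<kappa>_pos continuous_on_lstar r,
        where H="\<lambda>w. ln (S * w + lam0)" and H'=ell']
    by (simp add: lam_def has_real_derivative_ln_intensity continuous_on_ell')
  show "J_KL th
    = ((S + lam0) * \<tau> - S * integral {0..1} (psi_inv \<kappa> \<delta>) - integral {0..\<tau>} lstar
        - ln (S + lam0) * integral {0..\<tau>} lstar + integral {0..\<tau>} (\<lambda>t. lstar t * ln (lstar t)))
      - S * th + integral {0..1} (\<lambda>w. integral {0..th + psi_inv \<kappa> \<delta> w} lstar * ell' w)"
    unfolding JKL_eq_integral_0_tau[OF th]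
    using i[OF continuous_on_lam] i[OF continuous_on_lstar] i[OF c1] i[OF c2] I1 I2
    by (simp add: integral_add integral_diff integrable_diff)
qed

lemma J'_eq_integral: "J' th = - S + integral {0..1} (\<lambda>w. lstar (th + psi_inv \<kappa> \<delta> w) * ell' w)"
proof -
  have pk: "(\<lambda>w. psi \<kappa> \<delta> (th - th0 + psi_inv \<kappa> \<delta> w) * ell' w) integrable_on {0..1}"
    using \<delta>_pos \<kappa>_pos
    by (intro integrable_continuous_real continuous_intros continuous_on_ell' continuous_on_psi_inv_01)
  have "integral {0..1} (\<lambda>w. lstar (th + psi_inv \<kappa> \<delta> w) * ell' w)
      = integral {0..1} (\<lambda>w. (S + h) * (psi \<kappa> \<delta> (th - th0 + psi_inv \<kappa> \<delta> w) * ell' w) + lam0 * ell' w)"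
    by (rule integral_cong) (simp add: lstar_def lam_star_def algebra_simps)
  also have "\<dots> = (S + h) * F (th - th0) + lam0 * L"
    using integral_linear_combination[OF pk has_integral_integrable[OF has_integral_ell']]
    by (simp add: F_def)
  finally show ?thesis by (simp add: J'_def)
qed

lemma has_real_derivative_JKL:
  assumes th: "th \<in> Theta"
  shows "(J_KL has_real_derivative J' th) (at th)"
proof -
  obtain C where C: "\<And>th. th \<in> Theta \<Longrightarrow> J_KL th
    = C - S * th + integral {0..1} (\<lambda>w. integral {0..th + psi_inv \<kappa> \<delta> w} lstar * ell' w)"
    using JKL_eq_layer_integral by blast
  have Theta: "open Theta" "convex Theta" by (auto simp: Theta_def)
  have "((\<lambda>x. integral {0..1} (\<lambda>w. integral {0..x + psi_inv \<kappa> \<delta> w} lstar * ell' w))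
      has_real_derivative integral {0..1} (\<lambda>w. lstar (th + psi_inv \<kappa> \<delta> w) * ell' w)) (at th)"
    by (rule has_real_derivative_integral_shifted[OF continuous_on_lstar continuous_on_ell' continuous_on_psi_inv_01 Theta th])
       (use Theta_shift_pos in blast)
  then have "((\<lambda>x. C - S * x + integral {0..1} (\<lambda>w. integral {0..x + psi_inv \<kappa> \<delta> w} lstar * ell' w))
      has_real_derivative 0 - S * 1 + integral {0..1} (\<lambda>w. lstar (th + psi_inv \<kappa> \<delta> w) * ell' w)) (at th)"
    by (intro DERIV_add DERIV_diff DERIV_const DERIV_cmult DERIV_ident)
  then have "((\<lambda>x. C - S * x + integral {0..1} (\<lambda>w. integral {0..x + psi_inv \<kappa> \<delta> w} lstar * ell' w))
      has_real_derivative J' th) (at th)"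
    by (simp add: J'_eq_integral)
  then show ?thesis
    by (rule has_field_derivative_transform_within_open[OF _ Theta(1) th]) (simp add: C)
qed

lemma integrable_F_integrand:
  "(\<lambda>w. psi \<kappa> \<delta> (c + psi_inv \<kappa> \<delta> w) * ell' w) integrable_on {a..b}" if "0 \<le> a" "b \<le> 1"
proof -
  have "continuous_on {0..1} (\<lambda>w. psi \<kappa> \<delta> (c + psi_inv \<kappa> \<delta> w) * ell' w)"
    using \<delta>_pos \<kappa>_pos by (intro continuous_intros continuous_on_ell' continuous_on_psi_inv_01)
  then show ?thesis
    by (rule integrable_continuous_real[OF continuous_on_subset]) (use that in auto)
qed

lemma F_diff:
  "F c' - F c = integral {0..1}
     (\<lambda>w. psi \<kappa> \<delta> (c' + psi_inv \<kappa> \<delta> w) * ell' w - psi \<kappa> \<delta> (c + psi_inv \<kappa> \<delta> w) * ell' w)"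
  unfolding F_def by (rule integral_diff[OF integrable_F_integrand integrable_F_integrand, symmetric]) auto

lemma F_mono: "c \<le> c' \<Longrightarrow> F c \<le> F c'"
  unfolding F_def
  by (intro integral_le integrable_F_integrand mult_right_mono psi_mono[OF \<delta>_pos \<kappa>_pos])
     (auto intro: less_imp_le[OF ell'_pos])

lemma F_nonneg: "0 \<le> F c"
  unfolding F_def
  by (intro integral_nonneg integrable_F_integrand mult_nonneg_nonneg psi_nonneg)
     (auto intro: less_imp_le[OF ell'_pos])

lemma F_le_L: "F c \<le> L"
proof -
  have "F c \<le> integral {0..1} ell'"
    unfolding F_def
  proof (rule integral_le[OF integrable_F_integrand has_integral_integrable[OF has_integral_ell']])
    fix w :: real assume "w \<in> {0..1}"
    then show "psi \<kappa> \<delta> (c + psi_inv \<kappa> \<delta> w) * ell' w \<le> ell' w"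
      using ell'_pos[of w] psi_le_1[OF \<delta>_pos \<kappa>_pos] psi_nonneg
      by (simp add: mult_left_le_one_le mult.commute)
  qed auto
  then show ?thesis by simp
qed

lemma F_eq_0: "c \<le> - \<delta> \<Longrightarrow> F c = 0"
proof -
  assume c: "c \<le> - \<delta>"
  have "F c = integral {0..1} (\<lambda>_::real. 0::real)"
    unfolding F_def
  proof (rule integral_cong)
    fix w :: real assume "w \<in> {0..1}"
    then have "c + psi_inv \<kappa> \<delta> w \<le> 0" using psi_inv_le[OF \<delta>_pos \<kappa>_pos, of w] c by auto
    then show "psi \<kappa> \<delta> (c + psi_inv \<kappa> \<delta> w) * ell' w = 0" using psi_eq_0[OF _ \<delta>_pos] by simp
  qed
  then show ?thesis by simp
qed

lemma F_eq_L: "c \<ge> \<delta> \<Longrightarrow> F c = L"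
proof -
  assume c: "c \<ge> \<delta>"
  have "F c = integral {0..1} ell'"
    unfolding F_def
  proof (rule integral_cong)
    fix w :: real assume "w \<in> {0..1}"
    then have "c + psi_inv \<kappa> \<delta> w \<ge> \<delta>" using psi_inv_nonneg[OF \<delta>_pos, of \<kappa> w] c by auto
    then show "psi \<kappa> \<delta> (c + psi_inv \<kappa> \<delta> w) * ell' w = ell' w" using psi_eq_1 by simp
  qed
  then show ?thesis by simp
qed

lemma F_0: "S * F 0 + lam0 * L = S"
proof -
  have "S * F 0 + lam0 * L
      = integral {0..1} (\<lambda>w. S * (psi \<kappa> \<delta> (0 + psi_inv \<kappa> \<delta> w) * ell' w) + lam0 * ell' w)"
    using integral_linear_combination[OF integrable_F_integrand[where c=0 and a=0 and b=1]
        has_integral_integrable[OF has_integral_ell'], of S lam0]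
    by (simp add: F_def)
  also have "\<dots> = integral {0..1} (\<lambda>_::real. S)"
  proof (rule integral_cong)
    fix w :: real assume w: "w \<in> {0..1}"
    then have "psi \<kappa> \<delta> (0 + psi_inv \<kappa> \<delta> w) = w" using psi_psi_inv[OF \<delta>_pos \<kappa>_pos] by auto
    moreover have "(S * w + lam0) * ell' w = S" using intensity_pos[of w] w by (simp add: ell'_def)
    ultimately show "S * (psi \<kappa> \<delta> (0 + psi_inv \<kappa> \<delta> w) * ell' w) + lam0 * ell' w = S"
      by (simp add: algebra_simps)
  qed
  finally show ?thesis by simp
qed

text \<open>For \<open>w\<close> between \<open>psi (-c)\<close> and \<open>psi (\<delta> - c')\<close> both arguments \<open>c + psi_inv w\<close> and
  \<open>c' + psi_inv w\<close> lie in \<open>[0, \<delta>]\<close>, where \<open>psi\<close> has slope at least \<open>\<kappa> / \<delta>\<close>.\<close>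

lemma F_diff_ge:
  assumes "- \<delta> < c" "c < c'" "c' < \<delta>" "c' - c \<le> \<delta>"
  shows "S / (S + lam0) * (\<kappa> * (c' - c) / \<delta>) * (psi \<kappa> \<delta> (\<delta> - c') - psi \<kappa> \<delta> (- c)) \<le> F c' - F c"
proof -
  define q where "q w = psi \<kappa> \<delta> (c' + psi_inv \<kappa> \<delta> w) * ell' w - psi \<kappa> \<delta> (c + psi_inv \<kappa> \<delta> w) * ell' w" for w
  define a1 where "a1 = psi \<kappa> \<delta> (- c)"
  define b1 where "b1 = psi \<kappa> \<delta> (\<delta> - c')"
  define A where "A = S / (S + lam0) * (\<kappa> * (c' - c) / \<delta>)"
  have ab1: "0 \<le> a1" "a1 \<le> b1" "b1 \<le> 1"
    using psi_nonneg psi_le_1[OF \<delta>_pos \<kappa>_pos] psi_mono[OF \<delta>_pos \<kappa>_pos, of "- c" "\<delta> - c'"] assms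
    unfolding a1_def b1_def by auto
  have qi: "q integrable_on {a..b}" if "0 \<le> a" "b \<le> 1" for a b
    unfolding q_def using that by (intro integrable_diff integrable_F_integrand)
  have qA: "A \<le> q w" if w: "w \<in> {a1..b1}" for w
  proof -
    have w01: "0 \<le> w" "w \<le> 1" using w ab1 by auto
    have lo: "- c \<le> psi_inv \<kappa> \<delta> w" and hi: "psi_inv \<kappa> \<delta> w \<le> \<delta> - c'"
      using w assms le_psi_inv_of_psi_le[OF \<delta>_pos \<kappa>_pos, of "- c" w]
        psi_inv_le_of_le_psi[OF \<delta>_pos \<kappa>_pos, of "\<delta> - c'" w] w01
      by (auto simp: a1_def b1_def)
    have "\<kappa> * (c' - c) / \<delta> \<le> psi \<kappa> \<delta> (c' + psi_inv \<kappa> \<delta> w) - psi \<kappa> \<delta> (c + psi_inv \<kappa> \<delta> w)"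
      using psi_diff_ge[OF \<delta>_pos \<kappa>_pos, of "c + psi_inv \<kappa> \<delta> w" "c' + psi_inv \<kappa> \<delta> w"]
        lo hi assms \<kappa>_less by auto
    then have "A \<le> ell' w * (psi \<kappa> \<delta> (c' + psi_inv \<kappa> \<delta> w) - psi \<kappa> \<delta> (c + psi_inv \<kappa> \<delta> w))"
      unfolding A_def using ell'_ge[OF w01] ell'_pos[of w] w01 assms \<kappa>_pos \<delta>_pos S_pos lam0_pos
      by (intro mult_mono) auto
    then show ?thesis unfolding q_def by (simp add: algebra_simps)
  qed
  have "(b1 - a1) * A \<le> integral {a1..b1} q"
    using integral_le[OF integrable_const_ivl qi[of a1 b1] qA] ab1 by simp
  also have "\<dots> \<le> integral {0..1} q"
  proof (rule integral_subset_le)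
    show "\<forall>w \<in> {0..1}. 0 \<le> q w"
    proof
      fix w :: real assume "w \<in> {0..1}"
      then have "psi \<kappa> \<delta> (c + psi_inv \<kappa> \<delta> w) * ell' w \<le> psi \<kappa> \<delta> (c' + psi_inv \<kappa> \<delta> w) * ell' w"
        using assms less_imp_le[OF ell'_pos[of w]]
        by (intro mult_right_mono psi_mono[OF \<delta>_pos \<kappa>_pos]) auto
      then show "0 \<le> q w" by (simp add: q_def)
    qed
  qed (use ab1 qi in auto)
  finally show ?thesis using F_diff unfolding q_def A_def a1_def b1_def
    by (simp add: mult.commute mult.left_commute)
qed

lemma F_diff_le_of_pos:
  assumes "0 < a" "a \<le> c" "c \<le> c'"
  shows "F c' - F c \<le> S / lam0 * psi_lipschitz_const \<kappa> \<delta> a * (c' - c)"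
proof -
  have "integral {0..1} (\<lambda>w. psi \<kappa> \<delta> (c' + psi_inv \<kappa> \<delta> w) * ell' w - psi \<kappa> \<delta> (c + psi_inv \<kappa> \<delta> w) * ell' w)
      \<le> integral {0..1} (\<lambda>_::real. S / lam0 * psi_lipschitz_const \<kappa> \<delta> a * (c' - c))"
  proof (rule integral_le)
    fix w :: real assume w: "w \<in> {0..1}"
    have "psi \<kappa> \<delta> (c' + psi_inv \<kappa> \<delta> w) - psi \<kappa> \<delta> (c + psi_inv \<kappa> \<delta> w) \<le> psi_lipschitz_const \<kappa> \<delta> a * (c' - c)"
      using psi_diff_le[OF \<delta>_pos \<kappa>_pos, of a "c + psi_inv \<kappa> \<delta> w" "c' + psi_inv \<kappa> \<delta> w"]
        assms psi_inv_nonneg[OF \<delta>_pos, of \<kappa> w] \<kappa>_less by auto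
    moreover have "psi \<kappa> \<delta> (c + psi_inv \<kappa> \<delta> w) \<le> psi \<kappa> \<delta> (c' + psi_inv \<kappa> \<delta> w)"
      using assms by (intro psi_mono[OF \<delta>_pos \<kappa>_pos]) auto
    ultimately have "(psi \<kappa> \<delta> (c' + psi_inv \<kappa> \<delta> w) - psi \<kappa> \<delta> (c + psi_inv \<kappa> \<delta> w)) * ell' w
        \<le> (psi_lipschitz_const \<kappa> \<delta> a * (c' - c)) * (S / lam0)"
      using ell'_le[of w] ell'_pos[of w] w by (intro mult_mono) auto
    moreover have "psi \<kappa> \<delta> (c' + psi_inv \<kappa> \<delta> w) * ell' w - psi \<kappa> \<delta> (c + psi_inv \<kappa> \<delta> w) * ell' w
        = (psi \<kappa> \<delta> (c' + psi_inv \<kappa> \<delta> w) - psi \<kappa> \<delta> (c + psi_inv \<kappa> \<delta> w)) * ell' w"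
      by (simp add: left_diff_distrib)
    ultimately show "psi \<kappa> \<delta> (c' + psi_inv \<kappa> \<delta> w) * ell' w - psi \<kappa> \<delta> (c + psi_inv \<kappa> \<delta> w) * ell' w
        \<le> S / lam0 * psi_lipschitz_const \<kappa> \<delta> a * (c' - c)"
      by (simp add: mult.commute mult.left_commute)
  qed (auto intro: integrable_diff integrable_F_integrand)
  then show ?thesis using F_diff by simp
qed

lemma continuous_on_ell_psi_shift:
  "continuous_on {0..1} (\<lambda>v. ell (psi \<kappa> \<delta> (psi_inv \<kappa> \<delta> v + b)))"
proof -
  have "continuous_on {0..1} (\<lambda>v. psi \<kappa> \<delta> (psi_inv \<kappa> \<delta> v + b))"
    using \<delta>_pos \<kappa>_pos by (intro continuous_intros continuous_on_psi_inv_01)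
  then show ?thesis
    by (rule continuous_on_compose2[OF continuous_on_ell]) (use psi_nonneg psi_le_1[OF \<delta>_pos \<kappa>_pos] in auto)
qed

text \<open>For negative shifts the singularity of \<open>psi'\<close> at \<open>0\<close> sits inside the integral defining
  \<open>F\<close>. Substituting \<open>w = psi (psi_inv v + a)\<close> and integrating by parts moves the shift to an
  argument of \<open>psi\<close> that stays away from \<open>0\<close>.\<close>

lemma integral_F_tail_by_parts:
  assumes a: "0 < a" "a < \<delta>"
  shows "integral {psi \<kappa> \<delta> a..1} (\<lambda>w. psi \<kappa> \<delta> (psi_inv \<kappa> \<delta> w - a) * ell' w)
       = L * psi \<kappa> \<delta> (\<delta> - a) - integral {0..psi \<kappa> \<delta> (\<delta> - a)} (\<lambda>v. ell (psi \<kappa> \<delta> (psi_inv \<kappa> \<delta> v + a)))"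
proof -
  define ph where "ph = psi_inv \<kappa> \<delta>"
  define f where "f w = psi \<kappa> \<delta> (ph w - a) * ell' w" for w
  define v1 where "v1 = psi \<kappa> \<delta> (\<delta> - a)"
  define u where "u v = ((ph v + a) / \<delta>) powr \<kappa>" for v
  define u' where "u' v = \<kappa> * ((ph v + a) / \<delta>) powr (\<kappa> - 1) * (\<delta> * ((1/\<kappa>) * v powr (1/\<kappa> - 1)) / \<delta>)" for v
  have v1: "0 < v1" "v1 < 1" unfolding v1_def using psi_pos_less_1[OF \<delta>_pos \<kappa>_pos] a by auto
  have ph_v1: "ph v1 = \<delta> - a"
    unfolding ph_def v1_def using a by (auto intro!: psi_inv_psi[OF \<delta>_pos \<kappa>_pos])
  have ph_a_pos: "0 < ph v + a" for v
    using psi_inv_nonneg[OF \<delta>_pos, of \<kappa> v] a unfolding ph_def by linarith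
  have ph_le: "ph v \<le> \<delta> - a" if "v \<in> {0..v1}" for v
    using psi_inv_mono[OF \<delta>_pos \<kappa>_pos, of v v1] that ph_v1 unfolding ph_def by auto
  have u_eq: "u v = psi \<kappa> \<delta> (ph v + a)" if "v \<in> {0..v1}" for v
    using ph_le[OF that] ph_a_pos[of v] by (simp add: u_def psi_eq_powr_clamp[OF \<delta>_pos])
  have u_range: "0 \<le> u v \<and> u v \<le> 1" if "v \<in> {0..v1}" for v
    using u_eq[OF that] psi_nonneg psi_le_1[OF \<delta>_pos \<kappa>_pos] by auto
  have u_0: "u 0 = psi \<kappa> \<delta> a" and u_v1: "u v1 = 1"
    using u_eq[of 0] u_eq[of v1] v1 ph_v1 by (simp_all add: ph_def psi_eq_1)
  have u_cont: "continuous_on {0..v1} u"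
    unfolding u_def ph_def using ph_a_pos \<delta>_pos v1
    by (intro continuous_intros continuous_on_subset[OF continuous_on_psi_inv_01])
       (auto simp: ph_def less_imp_neq[symmetric])
  have "integral {u 0..u v1} f = ell (u v1) * v1 - ell (u 0) * 0 - integral {0..v1} (\<lambda>v. ell (u v) * 1)"
  proof (rule integral_substitution_by_parts[where c=0 and d=1 and g=ell' and u'=u'])
    show "f (u v) = ell' (u v) * v" if "v \<in> {0..v1}" for v
    proof -
      have "ph (u v) = ph v + a"
        unfolding u_eq[OF that] ph_def using ph_le[OF that] ph_a_pos[of v]
        by (intro psi_inv_psi[OF \<delta>_pos \<kappa>_pos]) (auto simp: ph_def)
      then show ?thesis using psi_psi_inv[OF \<delta>_pos \<kappa>_pos, of v] that v1 by (simp add: f_def ph_def)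
    qed
    show "(u has_real_derivative u' v) (at v)" if "v \<in> {0<..<v1}" for v
      using that \<kappa>_pos ph_a_pos[of v] \<delta>_pos unfolding u_def u'_def ph_def
      by (auto intro!: derivative_eq_intros has_real_derivative_psi_inv)
    show "(ell has_real_derivative ell' (u v)) (at (u v))" if "v \<in> {0<..<v1}" for v
      using that u_range by (intro has_real_derivative_ell) auto
    show "continuous_on {0..v1} (\<lambda>v. ell (u v))"
      by (rule continuous_on_compose2[OF continuous_on_ell u_cont]) (use u_range in auto)
    show "continuous_on {0..1} f"
      unfolding f_def ph_def using \<delta>_pos \<kappa>_pos
      by (intro continuous_intros continuous_on_psi_inv_01 continuous_on_ell')
  qed (use v1 u_0 u_v1 u_range u_cont psi_le_1[OF \<delta>_pos \<kappa>_pos] in \<open>auto intro: DERIV_ident continuous_on_id\<close>)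
  moreover have "integral {0..v1} (\<lambda>v. ell (u v)) = integral {0..v1} (\<lambda>v. ell (psi \<kappa> \<delta> (ph v + a)))"
    by (rule integral_cong) (simp add: u_eq)
  ultimately show ?thesis using u_0 u_v1 unfolding f_def[abs_def] ph_def v1_def by simp
qed

lemma F_neg_eq:
  assumes a: "0 < a" "a < \<delta>"
  shows "F (- a) = L - integral {0..1} (\<lambda>v. ell (psi \<kappa> \<delta> (psi_inv \<kappa> \<delta> v + a)))"
proof -
  define ph where "ph = psi_inv \<kappa> \<delta>"
  define f where "f w = psi \<kappa> \<delta> (ph w - a) * ell' w" for w
  define g where "g v = ell (psi \<kappa> \<delta> (ph v + a))" for v
  define w1 where "w1 = psi \<kappa> \<delta> a"
  define v1 where "v1 = psi \<kappa> \<delta> (\<delta> - a)"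
  have w1: "0 < w1" "w1 < 1" and v1: "0 < v1" "v1 < 1"
    unfolding w1_def v1_def using psi_pos_less_1[OF \<delta>_pos \<kappa>_pos] a by auto
  have ph_w1: "ph w1 = a" and ph_v1: "ph v1 = \<delta> - a"
    unfolding ph_def w1_def v1_def using a by (auto intro!: psi_inv_psi[OF \<delta>_pos \<kappa>_pos])
  have "F (- a) = integral {0..1} f"
    unfolding F_def f_def ph_def by (rule integral_cong) simp
  also have "\<dots> = integral {w1..1} f"
  proof -
    have "integral {0..w1} f = integral {0..w1} (\<lambda>_. 0)"
    proof (rule integral_cong)
      fix w assume "w \<in> {0..w1}"
      then have "ph w \<le> ph w1" unfolding ph_def by (intro psi_inv_mono[OF \<delta>_pos \<kappa>_pos]) auto
      then show "f w = 0" unfolding f_def using ph_w1 psi_eq_0[OF _ \<delta>_pos] by simp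
    qed
    moreover have "integral {0..w1} f + integral {w1..1} f = integral {0..1} f"
      using w1 unfolding f_def ph_def
      by (intro Henstock_Kurzweil_Integration.integral_combine integrable_F_integrand[where c="- a", simplified])
         auto
    ultimately show ?thesis by simp
  qed
  also have "\<dots> = L * v1 - integral {0..v1} g"
    using integral_F_tail_by_parts[OF a] unfolding f_def[abs_def] g_def[abs_def] ph_def w1_def v1_def .
  also have "integral {0..v1} g = integral {0..1} g - (1 - v1) * L"
  proof -
    have "integral {v1..1} g = integral {v1..1} (\<lambda>_. L)"
    proof (rule integral_cong)
      fix v assume "v \<in> {v1..1}"
      then have "ph v1 \<le> ph v" unfolding ph_def using v1 by (intro psi_inv_mono[OF \<delta>_pos \<kappa>_pos]) auto
      then show "g v = L" using ph_v1 psi_eq_1[of \<delta> "ph v + a"] by (simp add: g_def)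
    qed
    moreover have "integral {0..v1} g + integral {v1..1} g = integral {0..1} g"
      using v1 unfolding g_def ph_def
      by (intro Henstock_Kurzweil_Integration.integral_combine
          integrable_continuous_real[OF continuous_on_ell_psi_shift]) auto
    ultimately show ?thesis using v1 by simp
  qed
  finally show ?thesis unfolding g_def[abs_def] ph_def by (simp add: algebra_simps)
qed

lemma F_diff_le_of_neg:
  assumes "0 < a" "- \<delta> < c" "c \<le> c'" "c' \<le> - a"
  shows "F c' - F c \<le> S / lam0 * psi_lipschitz_const \<kappa> \<delta> a * (c' - c)"
proof -
  have i: "(\<lambda>v. ell (psi \<kappa> \<delta> (psi_inv \<kappa> \<delta> v + b))) integrable_on {0..1}" for b
    by (rule integrable_continuous_real[OF continuous_on_ell_psi_shift])
  have "F c' - F c = integral {0..1} (\<lambda>v. ell (psi \<kappa> \<delta> (psi_inv \<kappa> \<delta> v + - c)))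
      - integral {0..1} (\<lambda>v. ell (psi \<kappa> \<delta> (psi_inv \<kappa> \<delta> v + - c')))"
    using F_neg_eq[of "- c"] F_neg_eq[of "- c'"] assms by simp
  also have "\<dots> = integral {0..1} (\<lambda>v. ell (psi \<kappa> \<delta> (psi_inv \<kappa> \<delta> v + - c))
      - ell (psi \<kappa> \<delta> (psi_inv \<kappa> \<delta> v + - c')))"
    by (rule integral_diff[OF i i, symmetric])
  also have "\<dots> \<le> integral {0..1} (\<lambda>_::real. S / lam0 * psi_lipschitz_const \<kappa> \<delta> a * (c' - c))"
  proof (rule integral_le)
    fix v :: real assume v: "v \<in> {0..1}"
    define x where "x = psi_inv \<kappa> \<delta> v + - c'"
    define y where "y = psi_inv \<kappa> \<delta> v + - c"
    have xy: "a \<le> x" "x \<le> y" "y - x = c' - c"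
      using psi_inv_nonneg[OF \<delta>_pos, of \<kappa> v] assms unfolding x_def y_def by auto
    have "ell (psi \<kappa> \<delta> y) - ell (psi \<kappa> \<delta> x) \<le> S / lam0 * (psi \<kappa> \<delta> y - psi \<kappa> \<delta> x)"
      using xy psi_nonneg by (intro ell_diff_le psi_mono[OF \<delta>_pos \<kappa>_pos]) auto
    also have "\<dots> \<le> S / lam0 * (psi_lipschitz_const \<kappa> \<delta> a * (y - x))"
      using psi_diff_le[OF \<delta>_pos \<kappa>_pos _ assms(1) xy(1,2)] \<kappa>_less S_pos lam0_pos
      by (intro mult_left_mono) auto
    finally show "ell (psi \<kappa> \<delta> (psi_inv \<kappa> \<delta> v + - c)) - ell (psi \<kappa> \<delta> (psi_inv \<kappa> \<delta> v + - c'))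
        \<le> S / lam0 * psi_lipschitz_const \<kappa> \<delta> a * (c' - c)"
      using xy unfolding x_def y_def by (simp add: mult.assoc)
  qed (use i[of "- c"] i[of "- c'"] in \<open>auto intro: integrable_diff\<close>)
  finally show ?thesis by simp
qed

lemma F_bilipschitz_near:
  assumes "cs \<noteq> 0" "\<bar>cs\<bar> < \<delta>"
  obtains \<eta> m M where "\<eta> > 0" "m > 0" "M > 0"
    "\<And>c c'. cs - \<eta> \<le> c \<Longrightarrow> c \<le> c' \<Longrightarrow> c' \<le> cs + \<eta> \<Longrightarrow>
       m * (c' - c) \<le> F c' - F c \<and> F c' - F c \<le> M * (c' - c)"
proof -
  define a where "a = \<bar>cs\<bar> / 2"
  define \<eta> where "\<eta> = min a ((\<delta> - \<bar>cs\<bar>) / 2)"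
  have a: "0 < a" using assms by (simp add: a_def)
  have "\<eta> \<le> (\<delta> - \<bar>cs\<bar>) / 2" "\<eta> \<le> a"
    unfolding \<eta>_def by (rule min.cobounded2, rule min.cobounded1)
  moreover have "0 < \<eta>" using assms a by (simp add: \<eta>_def)
  ultimately have \<eta>: "0 < \<eta>" "\<eta> \<le> a" "\<bar>cs\<bar> + \<eta> < \<delta>" "2 * \<eta> < \<delta>"
    using assms by auto
  define \<gamma> where "\<gamma> = psi \<kappa> \<delta> (\<delta> - cs - \<eta>) - psi \<kappa> \<delta> (- cs + \<eta>)"
  have \<gamma>: "0 < \<gamma>"
    unfolding \<gamma>_def using \<eta> psi_strict_mono[OF \<delta>_pos \<kappa>_pos, of "- cs + \<eta>" "\<delta> - cs - \<eta>"] by auto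
  define m where "m = S / (S + lam0) * (\<kappa> / \<delta>) * \<gamma>"
  define M where "M = S / lam0 * psi_lipschitz_const \<kappa> \<delta> a"
  show ?thesis
  proof (rule that[OF \<eta>(1)])
    show "0 < m" unfolding m_def using S_pos lam0_pos \<kappa>_pos \<delta>_pos \<gamma> by simp
    show "0 < M" unfolding M_def using S_pos lam0_pos psi_lipschitz_const_pos[OF \<delta>_pos \<kappa>_pos a] by simp
    fix c c' assume cc: "cs - \<eta> \<le> c" "c \<le> c'" "c' \<le> cs + \<eta>"
    show "m * (c' - c) \<le> F c' - F c \<and> F c' - F c \<le> M * (c' - c)"
    proof
      show "m * (c' - c) \<le> F c' - F c"
      proof (cases "c = c'")
        case False
        have "\<gamma> \<le> psi \<kappa> \<delta> (\<delta> - c') - psi \<kappa> \<delta> (- c)"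
          using cc psi_mono[OF \<delta>_pos \<kappa>_pos, of "\<delta> - cs - \<eta>" "\<delta> - c'"]
            psi_mono[OF \<delta>_pos \<kappa>_pos, of "- c" "- cs + \<eta>"] by (auto simp: \<gamma>_def)
        then have "S / (S + lam0) * (\<kappa> * (c' - c) / \<delta>) * \<gamma>
            \<le> S / (S + lam0) * (\<kappa> * (c' - c) / \<delta>) * (psi \<kappa> \<delta> (\<delta> - c') - psi \<kappa> \<delta> (- c))"
          using cc S_pos lam0_pos \<kappa>_pos \<delta>_pos by (intro mult_left_mono) auto
        then have "m * (c' - c) \<le> S / (S + lam0) * (\<kappa> * (c' - c) / \<delta>) * (psi \<kappa> \<delta> (\<delta> - c') - psi \<kappa> \<delta> (- c))"
          by (simp add: m_def mult_ac)
        also have "\<dots> \<le> F c' - F c"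
          using False cc \<eta> by (intro F_diff_ge) auto
        finally show ?thesis .
      qed simp
      show "F c' - F c \<le> M * (c' - c)"
      proof (cases "cs > 0")
        case True
        then show ?thesis unfolding M_def using cc \<eta> a by (intro F_diff_le_of_pos) (auto simp: a_def)
      next
        case False
        then show ?thesis unfolding M_def using cc \<eta> a assms by (intro F_diff_le_of_neg) (auto simp: a_def)
      qed
    qed
  qed
qed

lemma J'_diff: "J' y - J' x = (S + h) * (F (y - th0) - F (x - th0))"
  by (simp add: J'_def algebra_simps)

lemma J'_mono: "x \<le> y \<Longrightarrow> J' x \<le> J' y"
  using F_mono[of "x - th0" "y - th0"] S_h_pos by (simp add: J'_def mult_left_mono)

lemma J'_neg_below: "x \<le> th0 - \<delta> \<Longrightarrow> J' x < 0"
  using F_eq_0[of "x - th0"] lam0_L_less by (simp add: J'_def)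

lemma J'_pos_above: "x \<ge> th0 + \<delta> \<Longrightarrow> J' x > 0"
  using F_eq_L[of "x - th0"] S_h_lam0_L_greater by (simp add: J'_def algebra_simps)

lemma J'_th0: "J' th0 = h * (S - lam0 * L) / S"
proof -
  have "F 0 = (S - lam0 * L) / S" using F_0 S_pos by (simp add: field_simps)
  then have "J' th0 = (S + h) * ((S - lam0 * L) / S) - (S - lam0 * L)" by (simp add: J'_def)
  also have "\<dots> = h * (S - lam0 * L) / S" using S_pos by (simp add: field_simps)
  finally show ?thesis .
qed

lemma abs_J'_le: "\<bar>J' x\<bar> \<le> S + (S + h) * L"
proof -
  have "0 \<le> (S + h) * F (x - th0)" "(S + h) * F (x - th0) \<le> (S + h) * L"
    using S_h_pos F_nonneg F_le_L by (auto intro: mult_left_mono)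
  then show ?thesis using lam0_L_less mult_pos_pos[OF lam0_pos L_pos] by (simp add: J'_def abs_le_iff)
qed

lemma J'_strict_mono_near:
  assumes "th0 - \<delta> < x" "x < y" "y < th0 + \<delta>"
  shows "J' x < J' y"
proof -
  define z where "z = x + min (y - x) (\<delta> / 2)"
  have z: "x < z" "z \<le> y" "z - x < \<delta>" using assms \<delta>_pos by (auto simp: z_def)
  have "0 < psi \<kappa> \<delta> (\<delta> - (z - th0)) - psi \<kappa> \<delta> (- (x - th0))"
    using psi_strict_mono[OF \<delta>_pos \<kappa>_pos, of "- (x - th0)" "\<delta> - (z - th0)"] assms z by auto
  then have "0 < S / (S + lam0) * (\<kappa> * ((z - th0) - (x - th0)) / \<delta>)
      * (psi \<kappa> \<delta> (\<delta> - (z - th0)) - psi \<kappa> \<delta> (- (x - th0)))"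
    using z S_pos lam0_pos \<kappa>_pos \<delta>_pos by (intro mult_pos_pos) auto
  also have "\<dots> \<le> F (z - th0) - F (x - th0)"
    using assms z by (intro F_diff_ge) auto
  finally have "0 < (S + h) * (F (z - th0) - F (x - th0))" using S_h_pos by simp
  then have "J' x < J' z" using J'_diff[of z x] by simp
  also have "J' z \<le> J' y" using z(2) by (rule J'_mono)
  finally show ?thesis .
qed

lemma J'_zero_near: "J' x = 0 \<Longrightarrow> th0 - \<delta> < x \<and> x < th0 + \<delta>"
  using J'_neg_below[of x] J'_pos_above[of x] by force

lemma J'_zero_unique:
  assumes "J' x = 0" "J' y = 0"
  shows "x = y"
proof (rule ccontr)
  assume "x \<noteq> y"
  then consider "x < y" | "y < x" by linarith
  then show False
    using J'_strict_mono_near[of x y] J'_strict_mono_near[of y x] J'_zero_near assms by cases auto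
qed

lemma J'_neg_before_zero: "J' p = 0 \<Longrightarrow> x < p \<Longrightarrow> J' x < 0"
  using J'_mono[of x p] J'_zero_unique[of p x] by force

lemma J'_pos_after_zero: "J' p = 0 \<Longrightarrow> p < x \<Longrightarrow> J' x > 0"
  using J'_mono[of p x] J'_zero_unique[of p x] by force

lemma J'_bilipschitz_near:
  assumes "J' p = 0" "h \<noteq> 0"
  obtains \<eta> m M where "\<eta> > 0" "m > 0" "M > 0"
    "\<And>x y. p - \<eta> \<le> x \<Longrightarrow> x \<le> y \<Longrightarrow> y \<le> p + \<eta> \<Longrightarrow>
       m * (y - x) \<le> J' y - J' x \<and> J' y - J' x \<le> M * (y - x)"
proof -
  have "p - th0 \<noteq> 0" using assms J'_th0 lam0_L_less S_pos by auto
  moreover have "\<bar>p - th0\<bar> < \<delta>" using J'_zero_near[OF assms(1)] by auto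
  ultimately obtain \<eta> m M where \<eta>mM: "\<eta> > 0" "m > 0" "M > 0"
    and F: "\<And>c c'. p - th0 - \<eta> \<le> c \<Longrightarrow> c \<le> c' \<Longrightarrow> c' \<le> p - th0 + \<eta> \<Longrightarrow>
       m * (c' - c) \<le> F c' - F c \<and> F c' - F c \<le> M * (c' - c)"
    by (rule F_bilipschitz_near) blast
  show ?thesis
  proof
    fix x y assume "p - \<eta> \<le> x" "x \<le> y" "y \<le> p + \<eta>"
    then have "m * (y - x) \<le> F (y - th0) - F (x - th0) \<and> F (y - th0) - F (x - th0) \<le> M * (y - x)"
      using F[of "x - th0" "y - th0"] by auto
    then show "(S + h) * m * (y - x) \<le> J' y - J' x \<and> J' y - J' x \<le> (S + h) * M * (y - x)"
      unfolding J'_diff using S_h_pos by (auto simp: mult.assoc intro: mult_left_mono)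
  qed (use \<eta>mM S_h_pos in auto)
qed

lemma is_interval_Theta: "is_interval Theta"
  using is_interval_box[of "\<alpha> - \<delta>" "\<beta> + \<delta>"] by (simp add: Theta_def)

lemma window_subset_Theta: "{th0 - \<delta>..th0 + \<delta>} \<subseteq> Theta"
  using th0 by (auto simp: Theta_def)

lemma J'_zero_exists:
  obtains p where "J' p = 0"
proof -
  have "\<delta> > 0" "\<And>x. x \<in> {th0 - \<delta>..th0 + \<delta>} \<Longrightarrow> (J_KL has_real_derivative J' x) (at x)"
    using \<delta>_pos window_subset_Theta has_real_derivative_JKL by auto
  then show ?thesis
    using deriv_zero_of_sign_change[of "th0 - \<delta>" "th0 + \<delta>" J_KL J'] J'_neg_below J'_pos_above that
    by force
qed

lemma J'_zero_mem_Theta: "J' p = 0 \<Longrightarrow> p \<in> Theta"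
  using J'_zero_near window_subset_Theta by fastforce

lemma JKL_strict_min:
  assumes "J' p = 0" "th \<in> Theta" "th \<noteq> p"
  shows "J_KL p < J_KL th"
  using strict_min_of_deriv_sign[OF is_interval_Theta J'_zero_mem_Theta[OF assms(1)] assms(2,3)]
    has_real_derivative_JKL J'_neg_before_zero[OF assms(1)] J'_pos_after_zero[OF assms(1)] by blast

lemma J'_zero_location:
  assumes "J' p = 0"
  shows "h > 0 \<Longrightarrow> p \<in> {th0 - \<delta><..<th0}" "h < 0 \<Longrightarrow> p \<in> {th0<..<th0 + \<delta>}" "h = 0 \<Longrightarrow> p = th0"
proof -
  show "p \<in> {th0 - \<delta><..<th0}" if "h > 0"
  proof -
    have "0 < J' th0" using J'_th0 lam0_L_less S_pos that by simp
    then show ?thesis using assms J'_zero_near J'_mono[of th0 p] by (auto simp: not_less[symmetric])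
  qed
  show "p \<in> {th0<..<th0 + \<delta>}" if "h < 0"
  proof -
    have "J' th0 < 0" using J'_th0 lam0_L_less S_pos that by (simp add: divide_neg_pos mult_neg_pos)
    then show ?thesis using assms J'_zero_near J'_mono[of p th0] by (auto simp: not_less[symmetric])
  qed
  show "p = th0" if "h = 0" using J'_th0 J'_zero_unique assms that by simp
qed

lemma JKL_bounds_near_min:
  assumes "J' p = 0" "h \<noteq> 0"
  obtains m M where "m > 0" "M > 0" "\<And>th. th \<in> Theta \<Longrightarrow>
    m * \<bar>th - p\<bar> \<le> \<bar>J' th\<bar> \<and> \<bar>J' th\<bar> \<le> M * \<bar>th - p\<bar>
    \<and> m / 2 * (th - p)^2 \<le> J_KL th - J_KL p \<and> J_KL th - J_KL p \<le> M / 2 * (th - p)^2"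
proof -
  have pT: "p \<in> Theta" by (rule J'_zero_mem_Theta[OF assms(1)])
  obtain \<eta> m0 M0 where local: "\<eta> > 0" "m0 > 0" "M0 > 0"
    "\<And>x y. p - \<eta> \<le> x \<Longrightarrow> x \<le> y \<Longrightarrow> y \<le> p + \<eta> \<Longrightarrow>
       m0 * (y - x) \<le> J' y - J' x \<and> J' y - J' x \<le> M0 * (y - x)"
    using J'_bilipschitz_near[OF assms] by blast
  have bound: "\<bar>J' x\<bar> \<le> S + (S + h) * L \<and> \<bar>x - p\<bar> \<le> \<beta> - \<alpha> + 2 * \<delta>" if "x \<in> Theta" for x
    using abs_J'_le that pT by (auto simp: Theta_def)
  obtain m M where mM: "m > 0" "M > 0"
    "\<And>x. x \<in> Theta \<Longrightarrow> m * \<bar>x - p\<bar> \<le> \<bar>J' x\<bar> \<and> \<bar>J' x\<bar> \<le> M * \<bar>x - p\<bar>"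
    by (rule linear_bounds_of_local_bounds[where D=J', OF J'_mono assms(1) local _ bound])
       (use window \<delta>_pos in auto)
  have "y \<le> p \<Longrightarrow> J' y \<le> 0" "p \<le> y \<Longrightarrow> 0 \<le> J' y" for y
    using J'_neg_before_zero[OF assms(1)] J'_pos_after_zero[OF assms(1)] assms(1) by (auto simp: le_less)
  then have "m / 2 * (th - p)^2 \<le> J_KL th - J_KL p \<and> J_KL th - J_KL p \<le> M / 2 * (th - p)^2"
    if "th \<in> Theta" for th
    by (intro quadratic_bounds_of_linear_bounds[OF is_interval_Theta pT that has_real_derivative_JKL _ _ mM(3)])
  then show ?thesis using that mM by blast
qed

end

theorem proposition1:
  fixes S lam0 \<kappa> \<delta> \<tau> \<alpha> \<beta> th0 h :: real
    and J :: "real \<Rightarrow> real"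
  assumes "S > 0" and "lam0 > 0" and "0 < \<kappa>" and "\<kappa> < 1/2"
    and "\<delta> > 0" and "\<tau> > 0" and "\<alpha> < \<beta>"
    and "0 \<le> \<alpha> - \<delta>" and "\<beta> + \<delta> \<le> \<tau> - \<delta>"
    and "th0 \<in> {\<alpha><..<\<beta>}"
    and "h > S / ln (1 + S / lam0) - S - lam0"
    and J_def: "J = JKL S lam0 \<kappa> \<delta> \<tau> th0 h"
  shows "\<exists>thh \<in> {\<alpha> - \<delta><..<\<beta> + \<delta>}.
    (\<forall>th \<in> {\<alpha> - \<delta><..<\<beta> + \<delta>}. th \<noteq> thh \<longrightarrow> J thh < J th)
    \<and> (\<forall>th \<in> {\<alpha> - \<delta><..<\<beta> + \<delta>}. (J has_real_derivative deriv J th) (at th))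
    \<and> deriv J thh = 0
    \<and> (\<forall>th \<in> {\<alpha> - \<delta><..<\<beta> + \<delta>}. deriv J th = 0 \<longrightarrow> th = thh)
    \<and> (h > 0 \<longrightarrow> thh \<in> {th0 - \<delta><..<th0})
    \<and> (h < 0 \<longrightarrow> thh \<in> {th0<..<th0 + \<delta>})
    \<and> (h = 0 \<longrightarrow> thh = th0)
    \<and> (h \<noteq> 0 \<longrightarrow> (\<exists>m M. m > 0 \<and> M > 0 \<and>
         (\<forall>th \<in> {\<alpha> - \<delta><..<\<beta> + \<delta>}.
            m * \<bar>th - thh\<bar> \<le> \<bar>deriv J th\<bar>
          \<and> \<bar>deriv J th\<bar> \<le> M * \<bar>th - thh\<bar>
          \<and> m / 2 * (th - thh)^2 \<le> J th - J thh
          \<and> J th - J thh \<le> M / 2 * (th - thh)^2)))"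
proof -
  interpret kl_setting S lam0 \<kappa> \<delta> \<tau> h th0 \<alpha> \<beta>
    using assms by unfold_locales auto
  have deriv_J: "deriv J_KL th = J' th" if "th \<in> Theta" for th
    by (rule DERIV_imp_deriv[OF has_real_derivative_JKL[OF that]])
  obtain p where p: "J' p = 0" by (rule J'_zero_exists)
  show ?thesis
    unfolding J_def Theta_def[symmetric]
  proof (intro bexI[of _ p] conjI ballI impI)
    show "(J_KL has_real_derivative deriv J_KL th) (at th)" if "th \<in> Theta" for th
      unfolding deriv_J[OF that] by (rule has_real_derivative_JKL[OF that])
    show "th = p" if "th \<in> Theta" "deriv J_KL th = 0" for th
      using J'_zero_unique[OF p] that deriv_J by simp
    show "\<exists>m M. m > 0 \<and> M > 0 \<and> (\<forall>th \<in> Theta. m * \<bar>th - p\<bar> \<le> \<bar>deriv J_KL th\<bar>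
      \<and> \<bar>deriv J_KL th\<bar> \<le> M * \<bar>th - p\<bar> \<and> m / 2 * (th - p)^2 \<le> J_KL th - J_KL p
      \<and> J_KL th - J_KL p \<le> M / 2 * (th - p)^2)" if "h \<noteq> 0"
      using JKL_bounds_near_min[OF p that] deriv_J by metis
  qed (use p J'_zero_mem_Theta[OF p] JKL_strict_min[OF p] J'_zero_location[OF p] deriv_J in simp_all)
qed

end
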